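(* Let $\mathbb{M}$ be a partial group. Then there is an isomorphism of simplicial groups $N\mathcal{A}ut(\mathbb{M})\cong\underline{\mathrm{aut}}(\mathbb{M})$ between the nerve of the strict monoidal category $\mathcal{A}ut(\mathbb{M})$ and the simplicial group of self-equivalences of $\mathbb{M}$.
   Context: Partial groups are simplicial sets whose $n$-simplices are the words $[x_1|\dots|x_n]$ in the domain of the partial product (faces multiply adjacent letters or delete first/last letter; degeneracies insert $1$); $v$ is the unique vertex, $\Delta[1]$ has non-degenerate edge $\iota_1\colon\bullet_0\to\bullet_1$. $N(\mathbb{M})$ denotes the normalizer: the set of $\eta\in\mathbb{M}_1$ such that for every $x$, $[\eta|x|\eta^{-1}]\in\mathbb{M}$ and $x\mapsto\eta x\eta^{-1}$ extends to an automorphism, and for every simplex $[x_1|\dots|x_n]$ the words $[\eta x_1\eta^{-1}|\dots|\eta x_i\eta^{-1}|\eta|x_{i+1}|\dots|x_n]$ ($0\le i\le n$) are simplices with equal products. $\underline{\mathrm{aut}}(\mathbb{M})$ is the simplicial group whose $n$-simplices are the maps $\Delta[n]\times\mathbb{M}\to\mathbb{M}$ that induce automorphisms of $\Delta[n]\times\mathbb{M}$ over $\Delta[n]$ (product: $\sigma\cdot\tau=\tau\circ(\mathrm{pr}_1,\sigma)$). The category $\mathcal{A}ut(\mathbb{M})$ has objects $\mathrm{Aut}(\mathbb{M})$; a morphism from $\Psi$ to $\Phi$, written $(\Phi\xleftarrow{\eta}\Psi)$, is an element $\eta=F(v,\iota_1)\in N(\mathbb{M})$ for a simplicial homotopy $F\colon\mathbb{M}\times\Delta[1]\to\mathbb{M}$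 with $F|_{\mathbb{M}\times\{\bullet_0\}}=\Phi$ and $F|_{\mathbb{M}\times\{\bullet_1\}}=\Psi$ (equivalently $\Phi(x)\eta=\eta\Psi(x)$ with the associated simplex conditions); composition is $(\Psi_0\xleftarrow{\eta_1}\Psi_1)\circ(\Psi_1\xleftarrow{\eta_2}\Psi_2)=(\Psi_0\xleftarrow{\eta_1\eta_2}\Psi_2)$. The monoidal product is $\Phi\otimes\Psi=\Phi\circ\Psi$ on objects and $(\Phi_0\xleftarrow{\omega}\Phi_1)\otimes(\Psi_0\xleftarrow{\eta}\Psi_1)=(\Phi_0\circ\Psi_0\xleftarrow{\Phi_0(\eta)\omega=\omega\Phi_1(\eta)}\Phi_1\circ\Psi_1)$, with unit $(\mathrm{Id}\xleftarrow{1}\mathrm{Id})$; this makes the nerve $N\mathcal{A}ut(\mathbb{M})$ a simplicial group. *)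

theory Defs
  imports Main
begin

record 'a pgroup =
  pg_M :: "'a set"
  pg_D :: "'a list set"
  pg_Pi :: "'a list \<Rightarrow> 'a"
  pg_inv :: "'a \<Rightarrow> 'a"

definition pg_one :: "'a pgroup \<Rightarrow> 'a" where
  "pg_one G = pg_Pi G []"

definition partial_group :: "'a pgroup \<Rightarrow> bool" where
  "partial_group G \<longleftrightarrow>
     pg_D G \<subseteq> lists (pg_M G) \<and>
     [] \<in> pg_D G \<and>
     (\<forall>x\<in>pg_M G. [x] \<in> pg_D G) \<and>
     (\<forall>u v. u @ v \<in> pg_D G \<longrightarrow> u \<in> pg_D G \<and> v \<in> pg_D G) \<and>
     (\<forall>w\<in>pg_D G. pg_Pi G w \<in> pg_M G) \<and>
     (\<forall>x\<in>pg_M G. pg_Pi G [x] = x) \<and>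
     (\<forall>u v w. u @ v @ w \<in> pg_D G \<longrightarrow>
        u @ [pg_Pi G v] @ w \<in> pg_D G \<and> pg_Pi G (u @ v @ w) = pg_Pi G (u @ [pg_Pi G v] @ w)) \<and>
     (\<forall>x\<in>pg_M G. pg_inv G x \<in> pg_M G \<and> pg_inv G (pg_inv G x) = x) \<and>
     (\<forall>w\<in>pg_D G. rev (map (pg_inv G) w) @ w \<in> pg_D G \<and>
        pg_Pi G (rev (map (pg_inv G) w) @ w) = pg_one G)"

text \<open>k-simplices: words of length k in the domain.\<close>
definition Dk :: "'a pgroup \<Rightarrow> nat \<Rightarrow> 'a list set" where
  "Dk G k = {w \<in> pg_D G. length w = k}"

definition wface :: "'a pgroup \<Rightarrow> nat \<Rightarrow> nat \<Rightarrow> 'a list \<Rightarrow> 'a list" where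
  "wface G k i w =
     (if i = 0 then tl w
      else if i = k then butlast w
      else take (i - 1) w @ [pg_Pi G [w ! (i - 1), w ! i]] @ drop (Suc i) w)"

definition wdeg :: "'a pgroup \<Rightarrow> nat \<Rightarrow> 'a list \<Rightarrow> 'a list" where
  "wdeg G i w = take i w @ [pg_one G] @ drop i w"

text \<open>k-simplices of Delta[n]: monotone maps [k] -> [n], as sorted lists of length k+1.\<close>
definition dsimp :: "nat \<Rightarrow> nat \<Rightarrow> nat list set" where
  "dsimp n k = {a. length a = Suc k \<and> sorted a \<and> (\<forall>j\<in>set a. j \<le> n)}"

definition ldel :: "nat \<Rightarrow> 'b list \<Rightarrow> 'b list" where
  "ldel i a = take i a @ drop (Suc i) a"

definition ldup :: "nat \<Rightarrow> 'b list \<Rightarrow> 'b list" where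
  "ldup i a = take (Suc i) a @ drop i a"

definition coface :: "nat \<Rightarrow> nat \<Rightarrow> nat" where
  "coface i j = (if j < i then j else Suc j)"

definition codeg :: "nat \<Rightarrow> nat \<Rightarrow> nat" where
  "codeg i j = (if j \<le> i then j else j - 1)"

definition prod_valid :: "'a pgroup \<Rightarrow> nat \<Rightarrow> nat list \<Rightarrow> 'a list \<Rightarrow> bool" where
  "prod_valid G n a w \<longleftrightarrow> (\<exists>k. a \<in> dsimp n k \<and> w \<in> Dk G k)"

definition prod_smap :: "'a pgroup \<Rightarrow> nat \<Rightarrow> (nat list \<Rightarrow> 'a list \<Rightarrow> 'a list) \<Rightarrow> bool" where
  "prod_smap G n F \<longleftrightarrow>
     (\<forall>k a w. a \<in> dsimp n k \<and> w \<in> Dk G k \<longrightarrow> F a w \<in> Dk G k) \<and>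
     (\<forall>a w. \<not> prod_valid G n a w \<longrightarrow> F a w = undefined) \<and>
     (\<forall>k a w i. a \<in> dsimp n (Suc k) \<and> w \<in> Dk G (Suc k) \<and> i \<le> Suc k \<longrightarrow>
        F (ldel i a) (wface G (Suc k) i w) = wface G (Suc k) i (F a w)) \<and>
     (\<forall>k a w i. a \<in> dsimp n k \<and> w \<in> Dk G k \<and> i \<le> k \<longrightarrow>
        F (ldup i a) (wdeg G i w) = wdeg G i (F a w))"

text \<open>n-simplices of aut(M): maps inducing automorphisms of Delta[n] x M over Delta[n].\<close>
definition aut_elem :: "'a pgroup \<Rightarrow> nat \<Rightarrow> (nat list \<Rightarrow> 'a list \<Rightarrow> 'a list) \<Rightarrow> bool" where
  "aut_elem G n F \<longleftrightarrow> prod_smap G n F \<and>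
     (\<forall>k a. a \<in> dsimp n k \<longrightarrow> bij_betw (F a) (Dk G k) (Dk G k))"

text \<open>sg_face X n i : level n -> level n-1 (i \<le> n); sg_deg X n i : level n -> level n+1 (i \<le> n);
  sg_mult X n : group product on level n.\<close>
record 'x ssg =
  sg_car :: "nat \<Rightarrow> 'x set"
  sg_face :: "nat \<Rightarrow> nat \<Rightarrow> 'x \<Rightarrow> 'x"
  sg_deg :: "nat \<Rightarrow> nat \<Rightarrow> 'x \<Rightarrow> 'x"
  sg_mult :: "nat \<Rightarrow> 'x \<Rightarrow> 'x \<Rightarrow> 'x"

definition ssg_iso :: "'x ssg \<Rightarrow> 'y ssg \<Rightarrow> (nat \<Rightarrow> 'x \<Rightarrow> 'y) \<Rightarrow> bool" where
  "ssg_iso X Y f \<longleftrightarrow>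
     (\<forall>n. bij_betw (f n) (sg_car X n) (sg_car Y n)) \<and>
     (\<forall>n i x. x \<in> sg_car X (Suc n) \<and> i \<le> Suc n \<longrightarrow>
        f n (sg_face X (Suc n) i x) = sg_face Y (Suc n) i (f (Suc n) x)) \<and>
     (\<forall>n i x. x \<in> sg_car X n \<and> i \<le> n \<longrightarrow>
        f (Suc n) (sg_deg X n i x) = sg_deg Y n i (f n x)) \<and>
     (\<forall>n x y. x \<in> sg_car X n \<and> y \<in> sg_car X n \<longrightarrow>
        f n (sg_mult X n x y) = sg_mult Y n (f n x) (f n y))"

definition aut_sg :: "'a pgroup \<Rightarrow> (nat list \<Rightarrow> 'a list \<Rightarrow> 'a list) ssg" where
  "aut_sg G = \<lparr>
     sg_car = (\<lambda>n. {F. aut_elem G n F}),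
     sg_face = (\<lambda>n i F. \<lambda>a w. if prod_valid G (n - 1) a w then F (map (coface i) a) w else undefined),
     sg_deg = (\<lambda>n i F. \<lambda>a w. if prod_valid G (Suc n) a w then F (map (codeg i) a) w else undefined),
     sg_mult = (\<lambda>n S T. \<lambda>a w. if prod_valid G n a w then T a (S a w) else undefined) \<rparr>"

text \<open>Automorphisms of the simplicial set M, as level-wise maps on words (undefined off the domain).\<close>
definition AutSet :: "'a pgroup \<Rightarrow> ('a list \<Rightarrow> 'a list) set" where
  "AutSet G = {P.
     (\<forall>w. w \<notin> pg_D G \<longrightarrow> P w = undefined) \<and>
     (\<forall>k. bij_betw P (Dk G k) (Dk G k)) \<and>
     (\<forall>k w i. w \<in> Dk G (Suc k) \<and> i \<le> Suc k \<longrightarrow>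
        P (wface G (Suc k) i w) = wface G (Suc k) i (P w)) \<and>
     (\<forall>k w i. w \<in> Dk G k \<and> i \<le> k \<longrightarrow> P (wdeg G i w) = wdeg G i (P w))}"

definition conj_word :: "'a pgroup \<Rightarrow> 'a \<Rightarrow> nat \<Rightarrow> 'a list \<Rightarrow> 'a list" where
  "conj_word G e i w =
     map (\<lambda>x. pg_Pi G [e, x, pg_inv G e]) (take i w) @ [e] @ drop i w"

definition normalizer :: "'a pgroup \<Rightarrow> 'a set" where
  "normalizer G = {e \<in> pg_M G.
     (\<forall>x\<in>pg_M G. [e, x, pg_inv G e] \<in> pg_D G) \<and>
     (\<exists>P\<in>AutSet G. \<forall>x\<in>pg_M G. P [x] = [pg_Pi G [e, x, pg_inv G e]]) \<and>
     (\<forall>w\<in>pg_D G. \<forall>i\<le>length w. conj_word G e i w \<in> pg_D G) \<and>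
     (\<forall>w\<in>pg_D G. \<forall>i\<le>length w. \<forall>j\<le>length w.
        pg_Pi G (conj_word G e i w) = pg_Pi G (conj_word G e j w))}"

text \<open>Morphisms from Psi to Phi: eta = F(v, iota_1) for a simplicial homotopy F with
  F restricted to bullet_0 equal to Phi and to bullet_1 equal to Psi.
  (The homotopy M x Delta[1] -> M is written with the factors swapped: F a w.)\<close>
definition aut_hom :: "'a pgroup \<Rightarrow> ('a list \<Rightarrow> 'a list) \<Rightarrow> ('a list \<Rightarrow> 'a list) \<Rightarrow> 'a set" where
  "aut_hom G Psi Phi = {e. e \<in> normalizer G \<and>
     (\<exists>F. prod_smap G 1 F \<and>
        (\<forall>k w. w \<in> Dk G k \<longrightarrow> F (replicate (Suc k) 0) w = Phi w) \<and>
        (\<forall>k w. w \<in> Dk G k \<longrightarrow> F (replicate (Suc k) 1) w = Psi w) \<and>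
        F [0, 1] (wdeg G 0 []) = [e])}"

definition aut_comp :: "'a pgroup \<Rightarrow> ('a list \<Rightarrow> 'a list) \<Rightarrow> ('a list \<Rightarrow> 'a list) \<Rightarrow> ('a list \<Rightarrow> 'a list)" where
  "aut_comp G P Q = (\<lambda>w. if w \<in> pg_D G then P (Q w) else undefined)"

text \<open>An n-simplex: objects Psi_0..Psi_n and morphisms eta_1..eta_n, eta_{i+1} = es!i : Psi_{i+1} -> Psi_i.\<close>
definition nerve_Aut :: "'a pgroup \<Rightarrow> (('a list \<Rightarrow> 'a list) list \<times> 'a list) ssg" where
  "nerve_Aut G = \<lparr>
     sg_car = (\<lambda>n. {(Ps, es). length Ps = Suc n \<and> length es = n \<and> set Ps \<subseteq> AutSet G \<and>
                      (\<forall>i<n. es ! i \<in> aut_hom G (Ps ! Suc i) (Ps ! i))}),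
     sg_face = (\<lambda>n i (Ps, es). (ldel i Ps, wface G n i es)),
     sg_deg = (\<lambda>n i (Ps, es). (ldup i Ps, wdeg G i es)),
     sg_mult = (\<lambda>n (Ps, es) (Qs, fs).
        (map2 (aut_comp G) Ps Qs,
         map (\<lambda>i. pg_Pi G ((Ps ! i) [fs ! i] @ [es ! i])) [0..<n])) \<rparr>"

end

theory Submission
  imports Defs
begin

text \<open>A simplicial map \<open>\<Delta>[n] \<times> \<M> \<rightarrow> \<M>\<close> over \<open>\<Delta>[n]\<close> is determined letter by letter by
  its values on edges of \<open>\<Delta>[n]\<close>, and since every edge is the long edge of a path of unit
  edges, by its vertex automorphisms \<open>\<Psi>\<^sub>j\<close> together with the letters \<open>\<eta>\<^sub>i = F(i \<rightarrow> i+1, 1)\<close>.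
  Restricting to the edge \<open>i \<rightarrow> i+1\<close> gives a homotopy from \<open>\<Psi>\<^sub>i\<close> to \<open>\<Psi>\<^sub>i\<^sub>+\<^sub>1\<close>, and evaluating it on
  short words shows \<open>\<Psi>\<^sub>i(x) \<eta>\<^sub>i = \<eta>\<^sub>i \<Psi>\<^sub>i\<^sub>+\<^sub>1(x)\<close> and \<open>\<eta>\<^sub>i \<in> N(\<M>)\<close>, so this data is an
  \<open>n\<close>-simplex of the nerve.  Conversely, a chain of morphisms is glued to a simplicial map by
  induction on the spread of the simplex of \<open>\<Delta>[n]\<close>, which is invertible on every fibre.
  The resulting bijections commute with faces and degeneracies; they reverse products, since
  \<open>aut(\<M>)\<close> composes in diagrammatic order, so precomposing with the group inverse of
  \<open>aut(\<M>)\<close> gives the isomorphism of simplicial groups.\<close>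

section \<open>Partial groups\<close>

locale partial_grp =
  fixes G :: "'a pgroup"
  assumes partial_group: "partial_group G"
begin

abbreviation "D \<equiv> pg_D G"
abbreviation "M \<equiv> pg_M G"
abbreviation "Pi \<equiv> pg_Pi G"
abbreviation "iv \<equiv> pg_inv G"
abbreviation "one \<equiv> pg_one G"

lemma D_in_lists: "w \<in> D \<Longrightarrow> w \<in> lists M"
  using partial_group unfolding partial_group_def by blast

lemma Nil_in_D [simp]: "[] \<in> D"
  using partial_group unfolding partial_group_def by blast

lemma singleton_in_D: "x \<in> M \<Longrightarrow> [x] \<in> D"
  using partial_group unfolding partial_group_def by blast

lemma append_in_D: "u @ v \<in> D \<Longrightarrow> u \<in> D \<and> v \<in> D"
  using partial_group unfolding partial_group_def by blast

lemma Pi_in_M: "w \<in> D \<Longrightarrow> Pi w \<in> M"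
  using partial_group unfolding partial_group_def by blast

lemma Pi_singleton [simp]: "x \<in> M \<Longrightarrow> Pi [x] = x"
  using partial_group unfolding partial_group_def by blast

lemma collapse_in_D: "u @ v @ w \<in> D \<Longrightarrow> u @ [Pi v] @ w \<in> D"
  using partial_group unfolding partial_group_def by blast

lemma Pi_collapse: "u @ v @ w \<in> D \<Longrightarrow> Pi (u @ [Pi v] @ w) = Pi (u @ v @ w)"
  using partial_group unfolding partial_group_def by metis

lemma iv_in_M: "x \<in> M \<Longrightarrow> iv x \<in> M"
  using partial_group unfolding partial_group_def by blast

lemma iv_iv [simp]: "x \<in> M \<Longrightarrow> iv (iv x) = x"
  using partial_group unfolding partial_group_def by blast

lemma in_D_in_M: "w \<in> D \<Longrightarrow> x \<in> set w \<Longrightarrow> x \<in> M"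
  using D_in_lists by auto

lemma infix_in_D: "u @ v @ w \<in> D \<Longrightarrow> v \<in> D"
  using append_in_D by blast

lemma one_eq_Pi_Nil: "one = Pi []"
  by (simp add: pg_one_def)

lemma one_in_M [simp]: "one \<in> M"
  using Pi_in_M[OF Nil_in_D] one_eq_Pi_Nil by simp

lemma insert_one: "u @ v \<in> D \<Longrightarrow> u @ [one] @ v \<in> D \<and> Pi (u @ [one] @ v) = Pi (u @ v)"
  using collapse_in_D[of u "[]" v] Pi_collapse[of u "[]" v] by (simp add: one_eq_Pi_Nil)

lemma Pi_one_left: "x \<in> M \<Longrightarrow> Pi [one, x] = x"
  using insert_one[of "[]" "[x]"] singleton_in_D by simp

lemma Pi_one_right: "x \<in> M \<Longrightarrow> Pi [x, one] = x"
  using insert_one[of "[x]" "[]"] singleton_in_D by simp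

lemma one_one_in_D: "[one, one] \<in> D"
  using insert_one[of "[]" "[one]"] singleton_in_D by simp

lemma pair_in_D_in_M: "[a, b] \<in> D \<Longrightarrow> a \<in> M \<and> b \<in> M"
  using D_in_lists by fastforce

definition word_inv :: "'a list \<Rightarrow> 'a list" where
  "word_inv w = rev (map iv w)"

lemma word_inv_append: "word_inv (u @ v) = word_inv v @ word_inv u"
  unfolding word_inv_def by simp

lemma word_inv_Cons: "word_inv (x # v) = word_inv v @ [iv x]"
  unfolding word_inv_def by simp

lemma word_inv_word_inv: "w \<in> lists M \<Longrightarrow> word_inv (word_inv w) = w"
  unfolding word_inv_def by (induct w) (auto simp: rev_map)

lemma Pi_word_inv_left: "w \<in> D \<Longrightarrow> word_inv w @ w \<in> D \<and> Pi (word_inv w @ w) = one"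
  using partial_group unfolding partial_group_def word_inv_def by blast

lemma word_inv_in_D: "w \<in> D \<Longrightarrow> word_inv w \<in> D"
  using Pi_word_inv_left append_in_D by blast

lemma Pi_word_inv_right: "w \<in> D \<Longrightarrow> w @ word_inv w \<in> D \<and> Pi (w @ word_inv w) = one"
  using Pi_word_inv_left[OF word_inv_in_D] word_inv_word_inv D_in_lists by simp

lemma Pi_iv_right: "x \<in> M \<Longrightarrow> [x, iv x] \<in> D \<and> Pi [x, iv x] = one"
  using Pi_word_inv_right[of "[x]"] singleton_in_D by (simp add: word_inv_def)

lemma Pi_iv_left: "x \<in> M \<Longrightarrow> [iv x, x] \<in> D \<and> Pi [iv x, x] = one"
  using Pi_word_inv_left[of "[x]"] singleton_in_D by (simp add: word_inv_def)

lemma iv_unique: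
  assumes ab: "[a, b] \<in> D" "Pi [a, b] = one"
  shows "b = iv a"
proof -
  have M: "a \<in> M" "b \<in> M" using pair_in_D_in_M ab by auto
  have "[iv b] @ [iv a, a, b] \<in> D"
    using Pi_word_inv_left[OF ab(1)] by (simp add: word_inv_def)
  hence aab: "[iv a, a, b] \<in> D" using append_in_D by blast
  have "b = Pi ([] @ [Pi [iv a, a]] @ [b])" using Pi_iv_left Pi_one_left M by simp
  also have "\<dots> = Pi ([iv a] @ [Pi [a, b]] @ [])"
    using Pi_collapse[of "[]" "[iv a, a]" "[b]"] Pi_collapse[of "[iv a]" "[a, b]" "[]"] aab by simp
  also have "\<dots> = iv a" using ab Pi_one_right iv_in_M M by simp
  finally show ?thesis .
qed

lemma Pi_word_inv: "w \<in> D \<Longrightarrow> Pi (word_inv w) = iv (Pi w)"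
proof -
  assume w: "w \<in> D"
  have split: "[] @ word_inv w @ w \<in> D" "Pi (word_inv w @ w) = one"
    using Pi_word_inv_left[OF w] by simp_all
  have "[Pi (word_inv w)] @ [Pi w] @ [] \<in> D"
    using collapse_in_D[OF split(1)] collapse_in_D[of "[Pi (word_inv w)]" w "[]"] by simp
  moreover have "Pi [Pi (word_inv w), Pi w] = one"
    using split Pi_collapse[OF split(1)] Pi_collapse[of "[Pi (word_inv w)]" w "[]"]
      collapse_in_D[OF split(1)] by simp
  ultimately have "Pi w = iv (Pi (word_inv w))" using iv_unique by simp
  thus ?thesis using iv_iv Pi_in_M word_inv_in_D w by metis
qed

lemma Pi_cancel_right:
  assumes ys: "[y, s] \<in> D"
  shows "[y, s, iv s] \<in> D \<and> [Pi [y, s], iv s] \<in> D \<and> Pi [Pi [y, s], iv s] = y"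
proof -
  have M: "y \<in> M" "s \<in> M" using pair_in_D_in_M ys by auto
  have "[y, s, iv s] @ [iv y] \<in> D"
    using Pi_word_inv_right[OF ys] by (simp add: word_inv_def)
  hence yss: "[y, s, iv s] \<in> D" using append_in_D by blast
  have "y = Pi ([y] @ [Pi [s, iv s]] @ [])" using Pi_iv_right M Pi_one_right by simp
  also have "\<dots> = Pi ([] @ [Pi [y, s]] @ [iv s])"
    using Pi_collapse[of "[y]" "[s, iv s]" "[]"] Pi_collapse[of "[]" "[y, s]" "[iv s]"] yss by simp
  finally show ?thesis using yss collapse_in_D[of "[]" "[y, s]" "[iv s]"] by simp
qed

lemma Pi_right_cancel: "[y, s] \<in> D \<Longrightarrow> [y', s] \<in> D \<Longrightarrow> Pi [y, s] = Pi [y', s] \<Longrightarrow> y = y'"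
  using Pi_cancel_right by metis

lemma append_iv_Pi_in_D: "w \<in> D \<Longrightarrow> w @ [iv (Pi w)] \<in> D"
  using Pi_word_inv_right collapse_in_D[of w "word_inv w" "[]"] Pi_word_inv by simp

end

section \<open>Simplices of the standard simplex\<close>

lemma length_ldel: "i < length a \<Longrightarrow> length (ldel i a) = length a - 1"
  unfolding ldel_def by simp

lemma nth_ldel: "i < length a \<Longrightarrow> j < length a - 1 \<Longrightarrow> ldel i a ! j = a ! coface i j"
  unfolding ldel_def coface_def by (auto simp: nth_append min_def)

lemma length_ldup: "i < length a \<Longrightarrow> length (ldup i a) = Suc (length a)"
  unfolding ldup_def by simp

lemma nth_ldup: "i < length a \<Longrightarrow> j < Suc (length a) \<Longrightarrow> ldup i a ! j = a ! codeg i j"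
  unfolding ldup_def codeg_def by (auto simp: nth_append min_def intro!: arg_cong[where f="(!) a"])

lemma ldel_map: "ldel i (map f a) = map f (ldel i a)"
  unfolding ldel_def by (simp add: take_map drop_map)

lemma ldup_map: "ldup i (map f a) = map f (ldup i a)"
  unfolding ldup_def by (simp add: take_map drop_map)

lemma set_ldel_subset: "set (ldel i a) \<subseteq> set a"
  unfolding ldel_def using set_take_subset set_drop_subset by fastforce

lemma set_ldup_subset: "set (ldup i a) \<subseteq> set a"
  unfolding ldup_def using set_take_subset set_drop_subset by fastforce

lemma ldel_replicate: "i < Suc k \<Longrightarrow> ldel i (replicate (Suc k) x) = replicate k x"
  unfolding ldel_def
  by (simp add: take_replicate drop_replicate min_def replicate_add[symmetric] del: replicate_Suc)

lemma ldup_replicate: "i < Suc k \<Longrightarrow> ldup i (replicate (Suc k) x) = replicate (Suc (Suc k)) x"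
  unfolding ldup_def
  by (simp add: take_replicate drop_replicate min_def replicate_add[symmetric] del: replicate_Suc)

lemma mono_coface: "mono (coface i)"
  unfolding coface_def by (rule monoI) auto

lemma mono_codeg: "mono (codeg i)"
  unfolding codeg_def by (rule monoI) auto

lemma dsimp_length: "a \<in> dsimp n k \<Longrightarrow> length a = Suc k"
  unfolding dsimp_def by simp

lemma dsimp_sorted: "a \<in> dsimp n k \<Longrightarrow> sorted a"
  unfolding dsimp_def by simp

lemma dsimp_nth_le: "a \<in> dsimp n k \<Longrightarrow> j < length a \<Longrightarrow> a ! j \<le> n"
  unfolding dsimp_def by auto

lemma dsimp_not_Nil: "a \<in> dsimp n k \<Longrightarrow> a \<noteq> []"
  unfolding dsimp_def by auto

lemma dsimp_hd_le: "a \<in> dsimp n k \<Longrightarrow> hd a \<le> n"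
  unfolding dsimp_def by (cases a) auto

lemma dsimp_last_le: "a \<in> dsimp n k \<Longrightarrow> last a \<le> n"
  using dsimp_not_Nil[of a n k] unfolding dsimp_def by auto

lemma replicate_in_dsimp: "j \<le> n \<Longrightarrow> replicate (Suc k) j \<in> dsimp n k"
  unfolding dsimp_def by (auto simp: sorted_replicate)

lemma edge_in_dsimp: "Suc i \<le> n \<Longrightarrow> [i, Suc i] \<in> dsimp n (Suc 0)"
  unfolding dsimp_def by simp

lemma dsimp_map:
  assumes a: "a \<in> dsimp n k" and f: "mono f" and fn: "\<forall>x\<le>n. f x \<le> m"
  shows "map f a \<in> dsimp m k"
proof -
  have "sorted (map f a)"
    using a f by (intro sorted_map_mono) (auto simp: dsimp_def mono_on_def mono_def)
  thus ?thesis using a fn unfolding dsimp_def by auto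
qed

lemma dsimp_ldel:
  assumes a: "a \<in> dsimp n (Suc k)" and i: "i \<le> Suc k"
  shows "ldel i a \<in> dsimp n k"
proof -
  have la: "length a = Suc (Suc k)" using a dsimp_length by blast
  have l: "length (ldel i a) = Suc k" using length_ldel[of i a] la i by simp
  have "sorted (ldel i a)" unfolding sorted_iff_nth_mono
  proof (intro allI impI)
    fix p q assume "p \<le> q" "q < length (ldel i a)"
    thus "ldel i a ! p \<le> ldel i a ! q"
      using nth_ldel[of i a] la i l sorted_nth_mono[OF dsimp_sorted[OF a]]
      by (simp add: coface_def)
  qed
  moreover have "\<forall>j\<in>set (ldel i a). j \<le> n"
    using set_ldel_subset[of i a] a unfolding dsimp_def by auto
  ultimately show ?thesis using l unfolding dsimp_def by simp
qed

lemma dsimp_ldup: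
  assumes a: "a \<in> dsimp n k" and i: "i \<le> k"
  shows "ldup i a \<in> dsimp n (Suc k)"
proof -
  have la: "length a = Suc k" using a dsimp_length by blast
  have l: "length (ldup i a) = Suc (Suc k)" using length_ldup[of i a] la i by simp
  have "sorted (ldup i a)" unfolding sorted_iff_nth_mono
  proof (intro allI impI)
    fix p q assume "p \<le> q" "q < length (ldup i a)"
    thus "ldup i a ! p \<le> ldup i a ! q"
      using nth_ldup[of i a] la i l sorted_nth_mono[OF dsimp_sorted[OF a]]
      by (simp add: codeg_def)
  qed
  moreover have "\<forall>j\<in>set (ldup i a). j \<le> n"
    using set_ldup_subset[of i a] a unfolding dsimp_def by auto
  ultimately show ?thesis using l unfolding dsimp_def by simp
qed

lemma sorted_01_eq_replicate:
  "sorted c \<Longrightarrow> set c \<subseteq> {0, 1::nat} \<Longrightarrow> \<exists>z\<le>length c. c = replicate z 0 @ replicate (length c - z) 1"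
proof (induct c)
  case (Cons x c)
  then obtain z where z: "z \<le> length c" "c = replicate z 0 @ replicate (length c - z) 1" by auto
  show ?case
  proof (cases "x = 0")
    case True
    thus ?thesis using z by (intro exI[of _ "Suc z"]) simp
  next
    case False
    hence "\<forall>y\<in>set (x # c). y = 1" using Cons(2,3) by fastforce
    hence "x # c = replicate 0 0 @ replicate (length (x # c) - 0) 1" by (simp add: replicate_eqI)
    thus ?thesis by blast
  qed
qed simp

lemma dsimp1_eq_replicate:
  "c \<in> dsimp 1 k \<Longrightarrow> \<exists>z\<le>Suc k. c = replicate z 0 @ replicate (Suc k - z) 1"
proof -
  assume "c \<in> dsimp 1 k"
  hence "sorted c" "set c \<subseteq> {0, 1}" "length c = Suc k" unfolding dsimp_def by auto
  thus ?thesis using sorted_01_eq_replicate[of c] by simp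
qed

lemma replicate_01_in_dsimp: "z \<le> Suc k \<Longrightarrow> replicate z 0 @ replicate (Suc k - z) 1 \<in> dsimp 1 k"
  unfolding dsimp_def by (auto simp: sorted_append)

lemma sorted_hd_le: "sorted a \<Longrightarrow> x \<in> set a \<Longrightarrow> hd a \<le> x"
  by (cases a) auto

lemma sorted_le_last: "sorted a \<Longrightarrow> x \<in> set a \<Longrightarrow> x \<le> last a"
  by (induct a) (auto simp: last_ConsR)

lemma sorted_eq_replicate_hd:
  assumes "sorted a" "a \<noteq> []" "\<not> hd a < last a"
  shows "a = replicate (length a) (hd a)"
proof -
  have "\<forall>x\<in>set a. x = hd a"
    using assms(3) sorted_hd_le[OF assms(1)] sorted_le_last[OF assms(1)] by fastforce
  thus ?thesis by (simp add: replicate_eqI)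
qed

lemma ldel_map_upt: "i \<le> Suc n \<Longrightarrow> ldel i (map g [0..<Suc (Suc n)]) = map (g \<circ> coface i) [0..<Suc n]"
  by (rule nth_equalityI) (auto simp: length_ldel nth_ldel coface_def nth_map_upt simp del: upt_Suc)

lemma ldup_map_upt: "i \<le> n \<Longrightarrow> ldup i (map g [0..<Suc n]) = map (g \<circ> codeg i) [0..<Suc (Suc n)]"
  by (rule nth_equalityI) (auto simp: length_ldup nth_ldup codeg_def nth_map_upt simp del: upt_Suc)

section \<open>Simplicial maps over the standard simplex\<close>

context partial_grp
begin

lemma Dk0_iff: "w \<in> Dk G 0 \<longleftrightarrow> w = []"
  unfolding Dk_def by auto

lemma Dk1_iff: "w \<in> Dk G (Suc 0) \<longleftrightarrow> (\<exists>x. w = [x] \<and> x \<in> M)"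
  unfolding Dk_def using singleton_in_D in_D_in_M by (auto simp: length_Suc_conv)

lemma singleton_in_Dk: "x \<in> M \<Longrightarrow> [x] \<in> Dk G (Suc 0)"
  using singleton_in_D by (simp add: Dk_def)

lemma split_at_pair:
  "0 < i \<Longrightarrow> i < length w \<Longrightarrow> w = take (i - 1) w @ [w ! (i - 1), w ! i] @ drop (Suc i) w"
  by (metis One_nat_def Suc_pred append.assoc append_Cons append_Nil id_take_nth_drop
      less_imp_le_nat take_Suc_conv_app_nth Suc_le_lessD)

lemma wface_inner:
  "0 < i \<Longrightarrow> i < Suc k \<Longrightarrow>
   wface G (Suc k) i w = take (i - 1) w @ [Pi [w ! (i - 1), w ! i]] @ drop (Suc i) w"
  unfolding wface_def by simp

lemma length_wface: "length w = Suc k \<Longrightarrow> i \<le> Suc k \<Longrightarrow> length (wface G (Suc k) i w) = k"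
  unfolding wface_def by auto

lemma nth_wface_inner:
  "length w = Suc k \<Longrightarrow> 0 < i \<Longrightarrow> i < Suc k \<Longrightarrow> l < k \<Longrightarrow>
   wface G (Suc k) i w ! l = (if l < i - 1 then w ! l else if l = i - 1 then Pi [w ! (i - 1), w ! i] else w ! Suc l)"
  by (auto simp: wface_inner nth_append min_def)

lemma wface_in_Dk_Pi:
  assumes w: "w \<in> Dk G (Suc k)" and i: "i \<le> Suc k"
  shows "wface G (Suc k) i w \<in> Dk G k \<and> (0 < i \<and> i < Suc k \<longrightarrow> Pi (wface G (Suc k) i w) = Pi w)"
proof -
  have wD: "w \<in> D" and lw: "length w = Suc k" using w by (auto simp: Dk_def)
  consider "i = 0" | "i = Suc k" | "0 < i" "i < Suc k" using i by linarith
  thus ?thesis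
  proof cases
    case 1
    obtain x w' where "w = x # w'" using lw by (cases w) auto
    thus ?thesis using 1 wD lw append_in_D[of "[x]" w'] unfolding wface_def Dk_def by simp
  next
    case 2
    obtain x w' where "w = w' @ [x]" using lw by (cases w rule: rev_cases) auto
    thus ?thesis using 2 wD lw append_in_D[of w' "[x]"] unfolding wface_def Dk_def by simp
  next
    case 3
    have split: "take (i - 1) w @ [w ! (i - 1), w ! i] @ drop (Suc i) w \<in> D"
      using split_at_pair[of i w] 3 lw wD by simp
    have "Pi (wface G (Suc k) i w) = Pi w"
      unfolding wface_inner[OF 3] using Pi_collapse[OF split] split_at_pair[of i w] 3 lw by simp
    moreover have "wface G (Suc k) i w \<in> D"
      unfolding wface_inner[OF 3] using collapse_in_D[OF split] .
    ultimately show ?thesis using length_wface[OF lw i] by (simp add: Dk_def)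
  qed
qed

lemma wface_in_Dk: "w \<in> Dk G (Suc k) \<Longrightarrow> i \<le> Suc k \<Longrightarrow> wface G (Suc k) i w \<in> Dk G k"
  using wface_in_Dk_Pi by blast

lemma wdeg_in_Dk_Pi:
  "w \<in> Dk G k \<Longrightarrow> i \<le> k \<Longrightarrow> wdeg G i w \<in> Dk G (Suc k) \<and> Pi (wdeg G i w) = Pi w"
  using insert_one[of "take i w" "drop i w"] unfolding wdeg_def Dk_def by auto

lemma wdeg_in_Dk: "w \<in> Dk G k \<Longrightarrow> i \<le> k \<Longrightarrow> wdeg G i w \<in> Dk G (Suc k)"
  using wdeg_in_Dk_Pi by blast

lemma prod_validI: "a \<in> dsimp n k \<Longrightarrow> w \<in> Dk G k \<Longrightarrow> prod_valid G n a w"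
  unfolding prod_valid_def by blast

lemma prod_validD: "prod_valid G n a w \<Longrightarrow> a \<in> dsimp n (length w) \<and> w \<in> Dk G (length w)"
  unfolding prod_valid_def Dk_def by auto

lemma smap_Dk: "prod_smap G n F \<Longrightarrow> a \<in> dsimp n k \<Longrightarrow> w \<in> Dk G k \<Longrightarrow> F a w \<in> Dk G k"
  unfolding prod_smap_def by blast

lemma smap_undefined: "prod_smap G n F \<Longrightarrow> \<not> prod_valid G n a w \<Longrightarrow> F a w = undefined"
  unfolding prod_smap_def by blast

lemma smap_face:
  "prod_smap G n F \<Longrightarrow> a \<in> dsimp n (Suc k) \<Longrightarrow> w \<in> Dk G (Suc k) \<Longrightarrow> i \<le> Suc k \<Longrightarrow>
   F (ldel i a) (wface G (Suc k) i w) = wface G (Suc k) i (F a w)"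
  unfolding prod_smap_def by blast

lemma smap_deg:
  "prod_smap G n F \<Longrightarrow> a \<in> dsimp n k \<Longrightarrow> w \<in> Dk G k \<Longrightarrow> i \<le> k \<Longrightarrow>
   F (ldup i a) (wdeg G i w) = wdeg G i (F a w)"
  unfolding prod_smap_def by blast

lemma aut_elem_smap: "aut_elem G n F \<Longrightarrow> prod_smap G n F"
  unfolding aut_elem_def by blast

lemma aut_elem_bij: "aut_elem G n F \<Longrightarrow> a \<in> dsimp n k \<Longrightarrow> bij_betw (F a) (Dk G k) (Dk G k)"
  unfolding aut_elem_def by blast

lemma prod_smap_restrictI:
  assumes into: "\<And>k a w. a \<in> dsimp n k \<Longrightarrow> w \<in> Dk G k \<Longrightarrow> H a w \<in> Dk G k"
    and face: "\<And>k a w i. a \<in> dsimp n (Suc k) \<Longrightarrow> w \<in> Dk G (Suc k) \<Longrightarrow> i \<le> Suc k \<Longrightarrow>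
      H (ldel i a) (wface G (Suc k) i w) = wface G (Suc k) i (H a w)"
    and deg: "\<And>k a w i. a \<in> dsimp n k \<Longrightarrow> w \<in> Dk G k \<Longrightarrow> i \<le> k \<Longrightarrow>
      H (ldup i a) (wdeg G i w) = wdeg G i (H a w)"
  shows "prod_smap G n (\<lambda>a w. if prod_valid G n a w then H a w else undefined)"
  unfolding prod_smap_def
proof (intro conjI allI impI)
  fix k a w i assume h: "a \<in> dsimp n (Suc k) \<and> w \<in> Dk G (Suc k) \<and> i \<le> Suc k"
  have "prod_valid G n (ldel i a) (wface G (Suc k) i w)"
    using prod_validI dsimp_ldel wface_in_Dk h by blast
  thus "(if prod_valid G n (ldel i a) (wface G (Suc k) i w)
          then H (ldel i a) (wface G (Suc k) i w) else undefined) =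
        wface G (Suc k) i (if prod_valid G n a w then H a w else undefined)"
    using face h prod_validI by auto
next
  fix k a w i assume h: "a \<in> dsimp n k \<and> w \<in> Dk G k \<and> i \<le> k"
  have "prod_valid G n (ldup i a) (wdeg G i w)"
    using prod_validI dsimp_ldup wdeg_in_Dk h by blast
  thus "(if prod_valid G n (ldup i a) (wdeg G i w) then H (ldup i a) (wdeg G i w) else undefined) =
        wdeg G i (if prod_valid G n a w then H a w else undefined)"
    using deg h prod_validI by auto
qed (use into prod_validI in auto)

lemma aut_elem_restrictI:
  assumes "\<And>k a w. a \<in> dsimp n k \<Longrightarrow> w \<in> Dk G k \<Longrightarrow> H a w \<in> Dk G k"
    and "\<And>k a w i. a \<in> dsimp n (Suc k) \<Longrightarrow> w \<in> Dk G (Suc k) \<Longrightarrow> i \<le> Suc k \<Longrightarrow>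
      H (ldel i a) (wface G (Suc k) i w) = wface G (Suc k) i (H a w)"
    and "\<And>k a w i. a \<in> dsimp n k \<Longrightarrow> w \<in> Dk G k \<Longrightarrow> i \<le> k \<Longrightarrow>
      H (ldup i a) (wdeg G i w) = wdeg G i (H a w)"
    and bij: "\<And>k a. a \<in> dsimp n k \<Longrightarrow> bij_betw (H a) (Dk G k) (Dk G k)"
  shows "aut_elem G n (\<lambda>a w. if prod_valid G n a w then H a w else undefined)"
  unfolding aut_elem_def
proof (intro conjI allI impI)
  fix k a assume a: "a \<in> dsimp n k"
  show "bij_betw (\<lambda>w. if prod_valid G n a w then H a w else undefined) (Dk G k) (Dk G k)"
    using bij[OF a] by (rule bij_betw_cong[THEN iffD1, rotated]) (simp add: prod_validI[OF a])
qed (rule prod_smap_restrictI[OF assms(1-3)])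

lemma smap_hd:
  assumes F: "prod_smap G n F"
  shows "a \<in> dsimp n (Suc k) \<Longrightarrow> w \<in> Dk G (Suc k) \<Longrightarrow> hd (F a w) = hd (F [a ! 0, a ! 1] [w ! 0])"
proof (induct k arbitrary: a w)
  case 0
  have "a = [a ! 0, a ! 1]" using dsimp_length[OF 0(1)] by (cases a; cases "tl a"; simp)
  moreover have "w = [w ! 0]" using 0(2) Dk1_iff by auto
  ultimately show ?case by simp
next
  case (Suc k)
  have la: "length a = Suc (Suc (Suc k))" using dsimp_length Suc(2) by blast
  have lw: "length w = Suc (Suc k)" using Suc(3) by (simp add: Dk_def)
  have ld: "ldel (Suc (Suc k)) a = butlast a" unfolding ldel_def using la by (simp add: butlast_conv_take)
  have wf: "\<And>v. wface G (Suc (Suc k)) (Suc (Suc k)) v = butlast v" unfolding wface_def by simp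
  have a1: "butlast a \<in> dsimp n (Suc k)" using dsimp_ldel[OF Suc(2), of "Suc (Suc k)"] ld by simp
  have w1: "butlast w \<in> Dk G (Suc k)" using wface_in_Dk[OF Suc(3), of "Suc (Suc k)"] wf by simp
  have lF: "length (F a w) = Suc (Suc k)" using smap_Dk[OF F Suc(2) Suc(3)] by (simp add: Dk_def)
  have "hd (F a w) = hd (butlast (F a w))" using lF by (cases "F a w") auto
  also have "\<dots> = hd (F (butlast a) (butlast w))"
    using smap_face[OF F Suc(2) Suc(3), of "Suc (Suc k)"] ld wf by simp
  also have "\<dots> = hd (F [a ! 0, a ! 1] [w ! 0])" using Suc(1)[OF a1 w1] la lw by (simp add: nth_butlast)
  finally show ?case .
qed

lemma smap_letterwise:
  assumes F: "prod_smap G n F"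
  shows "a \<in> dsimp n k \<Longrightarrow> w \<in> Dk G k \<Longrightarrow> F a w = map (\<lambda>j. hd (F [a ! j, a ! Suc j] [w ! j])) [0..<k]"
proof (induct k arbitrary: a w)
  case 0 thus ?case using smap_Dk[OF F] Dk0_iff by auto
next
  case (Suc k)
  have la: "length a = Suc (Suc k)" using dsimp_length Suc(2) by blast
  have lw: "length w = Suc k" using Suc(3) by (simp add: Dk_def)
  have lF: "length (F a w) = Suc k" using smap_Dk[OF F Suc(2) Suc(3)] by (simp add: Dk_def)
  have ld: "ldel 0 a = tl a" unfolding ldel_def by (simp add: drop_Suc)
  have wf: "\<And>v. wface G (Suc k) 0 v = tl v" unfolding wface_def by simp
  have a1: "tl a \<in> dsimp n k" using dsimp_ldel[OF Suc(2), of 0] ld by simp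
  have w1: "tl w \<in> Dk G k" using wface_in_Dk[OF Suc(3), of 0] wf by simp
  have tl: "tl (F a w) = map (\<lambda>j. hd (F [tl a ! j, tl a ! Suc j] [tl w ! j])) [0..<k]"
    using Suc(1)[OF a1 w1] smap_face[OF F Suc(2) Suc(3), of 0] ld wf by simp
  have "F a w = hd (F a w) # tl (F a w)" using lF by (cases "F a w") auto
  also have "\<dots> = map (\<lambda>j. hd (F [a ! j, a ! Suc j] [w ! j])) [0..<Suc k]"
    using tl smap_hd[OF F Suc(2) Suc(3)] la lw by (simp add: map_upt_Suc nth_tl del: upt_Suc)
  finally show ?case .
qed

lemma smap_Pi:
  assumes F: "prod_smap G n F"
  shows "a \<in> dsimp n (Suc k) \<Longrightarrow> w \<in> Dk G (Suc k) \<Longrightarrow> [Pi (F a w)] = F [hd a, last a] [Pi w]"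
proof (induct k arbitrary: a w)
  case 0
  have "a = [hd a, last a]" using dsimp_length[OF 0(1)] by (cases a; cases "tl a"; simp)
  moreover obtain x where "w = [x]" "x \<in> M" using 0(2) Dk1_iff by auto
  moreover obtain y where "F a w = [y]" "y \<in> M" using smap_Dk[OF F 0(1) 0(2)] Dk1_iff by auto
  ultimately show ?case by (metis Pi_singleton)
next
  case (Suc k)
  obtain x y r where a: "a = x # y # r" "r \<noteq> []"
    using dsimp_length[OF Suc(2)] by (cases a; cases "tl a"; force)
  have hl: "hd (ldel 1 a) = hd a" "last (ldel 1 a) = last a" using a unfolding ldel_def by auto
  have a1: "ldel 1 a \<in> dsimp n (Suc k)" using dsimp_ldel[OF Suc(2), of 1] by simp
  have w1: "wface G (Suc (Suc k)) 1 w \<in> Dk G (Suc k) \<and> Pi (wface G (Suc (Suc k)) 1 w) = Pi w"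
    using wface_in_Dk_Pi[OF Suc(3), of 1] by simp
  have Fw: "Pi (wface G (Suc (Suc k)) 1 (F a w)) = Pi (F a w)"
    using wface_in_Dk_Pi[OF smap_Dk[OF F Suc(2) Suc(3)], of 1] by simp
  have "[Pi (F a w)] = [Pi (F (ldel 1 a) (wface G (Suc (Suc k)) 1 w))]"
    using smap_face[OF F Suc(2) Suc(3), of 1] Fw by simp
  also have "\<dots> = F [hd a, last a] [Pi w]" using Suc(1)[OF a1 conjunct1[OF w1]] w1 hl by simp
  finally show ?case .
qed

end

section \<open>Automorphisms of a partial group\<close>

context partial_grp
begin

lemma AutSet_Dk: "P \<in> AutSet G \<Longrightarrow> w \<in> Dk G k \<Longrightarrow> P w \<in> Dk G k"
  unfolding AutSet_def bij_betw_def by blast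

lemma AutSet_undefined: "P \<in> AutSet G \<Longrightarrow> w \<notin> D \<Longrightarrow> P w = undefined"
  unfolding AutSet_def by blast

lemma AutSet_bij: "P \<in> AutSet G \<Longrightarrow> bij_betw P (Dk G k) (Dk G k)"
  unfolding AutSet_def by blast

lemma AutSet_face:
  "P \<in> AutSet G \<Longrightarrow> w \<in> Dk G (Suc k) \<Longrightarrow> i \<le> Suc k \<Longrightarrow>
   P (wface G (Suc k) i w) = wface G (Suc k) i (P w)"
  unfolding AutSet_def by blast

lemma AutSet_deg: "P \<in> AutSet G \<Longrightarrow> w \<in> Dk G k \<Longrightarrow> i \<le> k \<Longrightarrow> P (wdeg G i w) = wdeg G i (P w)"
  unfolding AutSet_def by blast

lemma AutSet_restrictI:
  assumes "\<And>k. bij_betw H (Dk G k) (Dk G k)"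
    and "\<And>k w i. w \<in> Dk G (Suc k) \<Longrightarrow> i \<le> Suc k \<Longrightarrow> H (wface G (Suc k) i w) = wface G (Suc k) i (H w)"
    and "\<And>k w i. w \<in> Dk G k \<Longrightarrow> i \<le> k \<Longrightarrow> H (wdeg G i w) = wdeg G i (H w)"
  shows "(\<lambda>w. if w \<in> D then H w else undefined) \<in> AutSet G"
  unfolding AutSet_def
proof (intro CollectI conjI allI impI)
  fix k show "bij_betw (\<lambda>w. if w \<in> D then H w else undefined) (Dk G k) (Dk G k)"
    using assms(1) by (rule bij_betw_cong[THEN iffD1, rotated]) (simp add: Dk_def)
qed (use assms(2,3) wface_in_Dk wdeg_in_Dk in \<open>auto simp: Dk_def\<close>)

definition const_smap :: "('a list \<Rightarrow> 'a list) \<Rightarrow> nat list \<Rightarrow> 'a list \<Rightarrow> 'a list" where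
  "const_smap P = (\<lambda>a w. if prod_valid G 0 a w then P w else undefined)"

lemma prod_smap_const_smap: "P \<in> AutSet G \<Longrightarrow> prod_smap G 0 (const_smap P)"
  unfolding const_smap_def by (rule prod_smap_restrictI) (auto simp: AutSet_Dk AutSet_face AutSet_deg)

lemma const_smap_eq: "w \<in> Dk G k \<Longrightarrow> const_smap P (replicate (Suc k) 0) w = P w"
  unfolding const_smap_def using prod_validI[OF replicate_in_dsimp[of 0 0]] by simp

definition lmap :: "('a list \<Rightarrow> 'a list) \<Rightarrow> 'a \<Rightarrow> 'a" where
  "lmap P x = hd (P [x])"

lemma AutSet_singleton: "P \<in> AutSet G \<Longrightarrow> x \<in> M \<Longrightarrow> P [x] = [lmap P x] \<and> lmap P x \<in> M"
  using AutSet_Dk[OF _ singleton_in_Dk, of P x] Dk1_iff unfolding lmap_def by auto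

lemma AutSet_letterwise:
  assumes P: "P \<in> AutSet G" and w: "w \<in> D"
  shows "P w = map (lmap P) w"
proof -
  have wk: "w \<in> Dk G (length w)" using w by (simp add: Dk_def)
  have letter: "const_smap P [0, 0] [w ! j] = P [w ! j]" if "j < length w" for j
    using const_smap_eq[OF singleton_in_Dk, of "w ! j" P] in_D_in_M[OF w] that
    by (simp add: numeral_2_eq_2)
  have "P w = const_smap P (replicate (Suc (length w)) 0) w" using const_smap_eq[OF wk] by simp
  also have "\<dots> = map (\<lambda>j. lmap P (w ! j)) [0..<length w]"
    using smap_letterwise[OF prod_smap_const_smap[OF P] replicate_in_dsimp wk] letter
    unfolding lmap_def by (simp add: nth_Cons' del: replicate_Suc)
  also have "\<dots> = map (lmap P) w" by (rule nth_equalityI) auto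
  finally show ?thesis .
qed

lemma AutSet_in_D: "P \<in> AutSet G \<Longrightarrow> w \<in> D \<Longrightarrow> P w \<in> D \<and> length (P w) = length w"
  using AutSet_Dk[of P w "length w"] by (simp add: Dk_def)

lemma AutSet_one: "P \<in> AutSet G \<Longrightarrow> P [one] = [one]"
  using AutSet_deg[of P "[]" 0 0] AutSet_Dk[of P "[]" 0] Dk0_iff by (simp add: wdeg_def)

lemma lmap_one: "P \<in> AutSet G \<Longrightarrow> lmap P one = one"
  unfolding lmap_def by (simp add: AutSet_one)

lemma lmap_Pi:
  assumes P: "P \<in> AutSet G" and w: "w \<in> D"
  shows "lmap P (Pi w) = Pi (P w)"
proof (cases w)
  case Nil thus ?thesis using lmap_one[OF P] AutSet_Dk[OF P, of "[]" 0] Dk0_iff one_eq_Pi_Nil by simp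
next
  case (Cons x w')
  have wk: "w \<in> Dk G (Suc (length w'))" using w Cons by (simp add: Dk_def)
  have "[Pi (P w)] = const_smap P [0, 0] [Pi w]"
    using smap_Pi[OF prod_smap_const_smap[OF P] replicate_in_dsimp wk] const_smap_eq[OF wk] by simp
  also have "\<dots> = P [Pi w]"
    using const_smap_eq[OF singleton_in_Dk[OF Pi_in_M[OF w]], of P] by (simp add: numeral_2_eq_2)
  finally show ?thesis unfolding lmap_def by (metis list.sel(1))
qed

lemma lmap_inj:
  assumes P: "P \<in> AutSet G" and xy: "x \<in> M" "y \<in> M" "lmap P x = lmap P y"
  shows "x = y"
proof -
  have "inj_on P (Dk G (Suc 0))" using AutSet_bij[OF P] bij_betw_def by blast
  moreover have "P [x] = P [y]" using AutSet_singleton[OF P] xy by metis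
  ultimately show ?thesis using singleton_in_Dk xy by (meson inj_onD list.inject)
qed

lemma inj_on_lmap: "P \<in> AutSet G \<Longrightarrow> inj_on (lmap P) M"
  by (rule inj_onI) (rule lmap_inj)

lemma lmap_iv:
  assumes P: "P \<in> AutSet G" and x: "x \<in> M"
  shows "lmap P (iv x) = iv (lmap P x)"
proof -
  have xx: "[x, iv x] \<in> D" "Pi [x, iv x] = one" using Pi_iv_right x by auto
  have "P [x, iv x] = [lmap P x, lmap P (iv x)]" using AutSet_letterwise[OF P xx(1)] by simp
  hence "[lmap P x, lmap P (iv x)] \<in> D" "Pi [lmap P x, lmap P (iv x)] = one"
    using AutSet_in_D[OF P xx(1)] lmap_Pi[OF P xx(1)] xx(2) lmap_one[OF P] by auto
  thus ?thesis using iv_unique by blast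
qed

definition aut_inv :: "('a list \<Rightarrow> 'a list) \<Rightarrow> 'a list \<Rightarrow> 'a list" where
  "aut_inv P = (\<lambda>w. if w \<in> D then inv_into (Dk G (length w)) P w else undefined)"

lemma aut_inv_inverse:
  assumes P: "P \<in> AutSet G" and w: "w \<in> D"
  shows "aut_inv P w \<in> Dk G (length w) \<and> P (aut_inv P w) = w \<and> aut_inv P (P w) = w"
proof -
  have b: "bij_betw P (Dk G (length w)) (Dk G (length w))" using AutSet_bij[OF P] .
  have wk: "w \<in> Dk G (length w)" using w by (simp add: Dk_def)
  have "inv_into (Dk G (length w)) P w \<in> Dk G (length w)"
    using b wk by (metis bij_betw_def inv_into_into)
  thus ?thesis
    using bij_betw_inv_into_right[OF b wk] bij_betw_inv_into_left[OF b wk] AutSet_in_D[OF P w] w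
    unfolding aut_inv_def by (simp add: Dk_def)
qed

lemma aut_inv_eqI: "P \<in> AutSet G \<Longrightarrow> v \<in> D \<Longrightarrow> P v = w \<Longrightarrow> aut_inv P w = v"
  using aut_inv_inverse by blast

lemma aut_inv_AutSet:
  assumes P: "P \<in> AutSet G"
  shows "aut_inv P \<in> AutSet G"
  unfolding aut_inv_def
proof (rule AutSet_restrictI)
  fix k show "bij_betw (\<lambda>w. inv_into (Dk G (length w)) P w) (Dk G k) (Dk G k)"
    using bij_betw_inv_into[OF AutSet_bij[OF P, of k]]
    by (rule bij_betw_cong[THEN iffD1, rotated]) (simp add: Dk_def)
next
  fix k w i assume w: "w \<in> Dk G (Suc k)" and i: "i \<le> Suc k"
  let ?v = "aut_inv P w"
  have v: "?v \<in> Dk G (Suc k)" "P ?v = w" using aut_inv_inverse[OF P] w by (auto simp: Dk_def)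
  have "aut_inv P (wface G (Suc k) i w) = wface G (Suc k) i ?v"
    using aut_inv_eqI[OF P] AutSet_face[OF P v(1) i] wface_in_Dk[OF v(1) i] v(2) by (simp add: Dk_def)
  thus "inv_into (Dk G (length (wface G (Suc k) i w))) P (wface G (Suc k) i w) =
        wface G (Suc k) i (inv_into (Dk G (length w)) P w)"
    using wface_in_Dk[OF w i] w unfolding aut_inv_def by (simp add: Dk_def)
next
  fix k w i assume w: "w \<in> Dk G k" and i: "i \<le> k"
  let ?v = "aut_inv P w"
  have v: "?v \<in> Dk G k" "P ?v = w" using aut_inv_inverse[OF P] w by (auto simp: Dk_def)
  have "aut_inv P (wdeg G i w) = wdeg G i ?v"
    using aut_inv_eqI[OF P] AutSet_deg[OF P v(1) i] wdeg_in_Dk[OF v(1) i] v(2) by (simp add: Dk_def)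
  thus "inv_into (Dk G (length (wdeg G i w))) P (wdeg G i w) = wdeg G i (inv_into (Dk G (length w)) P w)"
    using wdeg_in_Dk[OF w i] w unfolding aut_inv_def by (simp add: Dk_def)
qed

lemma lmap_aut_inv:
  assumes P: "P \<in> AutSet G" and x: "x \<in> M"
  shows "lmap P (lmap (aut_inv P) x) = x" "lmap (aut_inv P) (lmap P x) = x"
proof -
  have "P (aut_inv P [x]) = [x]" "aut_inv P (P [x]) = [x]"
    using aut_inv_inverse[OF P singleton_in_D[OF x]] by auto
  thus "lmap P (lmap (aut_inv P) x) = x" "lmap (aut_inv P) (lmap P x) = x"
    using AutSet_singleton[OF P] AutSet_singleton[OF aut_inv_AutSet[OF P]] x by (metis list.inject)+
qed

lemma aut_comp_AutSet:
  assumes P: "P \<in> AutSet G" and Q: "Q \<in> AutSet G"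
  shows "aut_comp G P Q \<in> AutSet G"
  unfolding aut_comp_def
proof (rule AutSet_restrictI)
  fix k show "bij_betw (\<lambda>w. P (Q w)) (Dk G k) (Dk G k)"
    using bij_betw_trans[OF AutSet_bij[OF Q] AutSet_bij[OF P]] by (simp add: comp_def)
next
  fix k w i assume "w \<in> Dk G (Suc k)" "i \<le> Suc k"
  thus "P (Q (wface G (Suc k) i w)) = wface G (Suc k) i (P (Q w))"
    by (simp add: AutSet_face[OF P] AutSet_face[OF Q] AutSet_Dk[OF Q])
next
  fix k w i assume "w \<in> Dk G k" "i \<le> k"
  thus "P (Q (wdeg G i w)) = wdeg G i (P (Q w))"
    using AutSet_deg[OF P AutSet_Dk[OF Q]] AutSet_deg[OF Q] by simp
qed

lemma lmap_aut_comp: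
  assumes P: "P \<in> AutSet G" and Q: "Q \<in> AutSet G" and x: "x \<in> M"
  shows "lmap (aut_comp G P Q) x = lmap P (lmap Q x)"
  using AutSet_singleton[OF Q x] AutSet_singleton[OF P] singleton_in_D[OF x]
  unfolding aut_comp_def lmap_def by simp

end

section \<open>Homotopies between automorphisms\<close>

definition (in partial_grp) is_homotopy ::
    "('a list \<Rightarrow> 'a list) \<Rightarrow> ('a list \<Rightarrow> 'a list) \<Rightarrow> 'a \<Rightarrow> (nat list \<Rightarrow> 'a list \<Rightarrow> 'a list) \<Rightarrow> bool" where
  "is_homotopy Phi Psi e F \<longleftrightarrow> prod_smap G 1 F \<and>
     (\<forall>k w. w \<in> Dk G k \<longrightarrow> F (replicate (Suc k) 0) w = Phi w) \<and>
     (\<forall>k w. w \<in> Dk G k \<longrightarrow> F (replicate (Suc k) 1) w = Psi w) \<and>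
     F [0, 1] (wdeg G 0 []) = [e]"

lemma (in partial_grp) aut_hom_iff: "e \<in> aut_hom G Psi Phi \<longleftrightarrow> e \<in> normalizer G \<and> (\<exists>F. is_homotopy Phi Psi e F)"
  unfolding aut_hom_def is_homotopy_def by simp

locale aut_homotopy = partial_grp +
  fixes Phi Psi e F
  assumes Phi: "Phi \<in> AutSet G" and Psi: "Psi \<in> AutSet G" and homotopy: "is_homotopy Phi Psi e F"
begin

lemma F_smap: "prod_smap G 1 F"
  using homotopy unfolding is_homotopy_def by blast

lemma F_at_0: "w \<in> Dk G k \<Longrightarrow> F (replicate (Suc k) 0) w = Phi w"
  using homotopy unfolding is_homotopy_def by blast

lemma F_at_1: "w \<in> Dk G k \<Longrightarrow> F (replicate (Suc k) 1) w = Psi w"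
  using homotopy unfolding is_homotopy_def by blast

lemma F_edge_one: "F [0, 1] [one] = [e]"
  using homotopy unfolding is_homotopy_def wdeg_def by simp

lemma e_in_M: "e \<in> M"
  using smap_Dk[OF F_smap edge_in_dsimp[of 0] singleton_in_Dk[OF one_in_M]] F_edge_one Dk1_iff by auto

lemma F_vertex_letters:
  assumes x: "x \<in> M"
  shows "F [0, 0] [x] = [lmap Phi x]" "F [1, 1] [x] = [lmap Psi x]"
  using F_at_0[OF singleton_in_Dk[OF x]] F_at_1[OF singleton_in_Dk[OF x]]
    AutSet_singleton[OF Phi x] AutSet_singleton[OF Psi x] by (simp_all add: numeral_2_eq_2)

text \<open>Evaluating \<open>F\<close> on the 2-simplices \<open>[x|1]\<close> over \<open>001\<close> and \<open>[1|x]\<close> over \<open>011\<close> gives the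
  two expressions for the edge of \<open>x\<close>; their equality is the relation \<open>\<Phi>(x) \<eta> = \<eta> \<Psi>(x)\<close>.\<close>

lemma F_edge_letter_Phi:
  assumes x: "x \<in> M"
  shows "[lmap Phi x, e] \<in> D \<and> F [0, 1] [x] = [Pi [lmap Phi x, e]]"
proof -
  have w: "[x, one] \<in> Dk G (Suc (Suc 0))"
    using insert_one[of "[x]" "[]"] singleton_in_D[OF x] by (simp add: Dk_def)
  have c: "[0, 0, 1] \<in> dsimp 1 (Suc (Suc 0))" unfolding dsimp_def by simp
  have Fxe: "F [0, 0, 1] [x, one] = [lmap Phi x, e]"
    using smap_letterwise[OF F_smap c w] F_vertex_letters[OF x] F_edge_one by simp
  show ?thesis
    using smap_Pi[OF F_smap c w] smap_Dk[OF F_smap c w] Fxe Pi_one_right[OF x] by (simp add: Dk_def)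
qed

lemma F_edge_letter_Psi:
  assumes x: "x \<in> M"
  shows "[e, lmap Psi x] \<in> D \<and> F [0, 1] [x] = [Pi [e, lmap Psi x]]"
proof -
  have w: "[one, x] \<in> Dk G (Suc (Suc 0))"
    using insert_one[of "[]" "[x]"] singleton_in_D[OF x] by (simp add: Dk_def)
  have c: "[0, 1, 1] \<in> dsimp 1 (Suc (Suc 0))" unfolding dsimp_def by simp
  have Fex: "F [0, 1, 1] [one, x] = [e, lmap Psi x]"
    using smap_letterwise[OF F_smap c w] F_vertex_letters[OF x] F_edge_one by simp
  show ?thesis
    using smap_Pi[OF F_smap c w] smap_Dk[OF F_smap c w] Fex Pi_one_left[OF x] by (simp add: Dk_def)
qed

lemma Phi_e_eq_e_Psi: "x \<in> M \<Longrightarrow> Pi [lmap Phi x, e] = Pi [e, lmap Psi x]"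
  using F_edge_letter_Phi F_edge_letter_Psi by fastforce

lemma F_split:
  assumes uxu: "u @ [x] @ u' \<in> D"
  shows "F (replicate (Suc (length u)) 0 @ replicate (Suc (length u')) 1) (u @ [x] @ u') =
         map (lmap Phi) u @ [Pi [lmap Phi x, e]] @ map (lmap Psi) u'"
proof -
  let ?c = "replicate (Suc (length u)) 0 @ replicate (Suc (length u')) (1::nat)"
  let ?y = "u @ [x] @ u'" and ?k = "Suc (length u + length u')"
  have c: "?c \<in> dsimp 1 ?k" using replicate_01_in_dsimp[of "Suc (length u)" ?k] by simp
  have y: "?y \<in> Dk G ?k" using uxu by (simp add: Dk_def)
  have yM: "j < ?k \<Longrightarrow> ?y ! j \<in> M" for j using in_D_in_M[OF uxu nth_mem[of j ?y]] by simp
  have c_nth: "j < Suc ?k \<Longrightarrow> ?c ! j = (if j \<le> length u then 0 else 1)" for j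
    by (simp add: nth_append del: replicate_Suc)
  have "F ?c ?y = map (\<lambda>j. hd (F [?c ! j, ?c ! Suc j] [?y ! j])) [0..<?k]"
    using smap_letterwise[OF F_smap c y] .
  also have "\<dots> = map (lmap Phi) u @ [Pi [lmap Phi x, e]] @ map (lmap Psi) u'"
  proof (rule nth_equalityI)
    fix j assume "j < length (map (\<lambda>j. hd (F [?c ! j, ?c ! Suc j] [?y ! j])) [0..<?k])"
    hence j: "j < ?k" by simp
    have letters: "hd (F [0, 0] [?y ! j]) = lmap Phi (?y ! j)" "hd (F [1, 1] [?y ! j]) = lmap Psi (?y ! j)"
      "hd (F [0, 1] [?y ! j]) = Pi [lmap Phi (?y ! j), e]"
      using F_vertex_letters[OF yM[OF j]] F_edge_letter_Phi[OF yM[OF j]] by simp_all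
    let ?lhs = "map (\<lambda>j. hd (F [?c ! j, ?c ! Suc j] [?y ! j])) [0..<?k] ! j"
    have lhs: "?lhs = hd (F [?c ! j, ?c ! Suc j] [?y ! j])" using j by (simp del: upt_Suc)
    consider "j < length u" | "j = length u" | t where "j = Suc (length u) + t" "t < length u'"
      using j less_imp_Suc_add by (metis add_Suc linorder_neqE_nat nat_add_left_cancel_less)
    thus "?lhs = (map (lmap Phi) u @ [Pi [lmap Phi x, e]] @ map (lmap Psi) u') ! j"
    proof cases
      case 1
      thus ?thesis using lhs letters c_nth[of j] c_nth[of "Suc j"] j by (simp add: nth_append)
    next
      case 2
      thus ?thesis using lhs letters c_nth[of j] c_nth[of "Suc j"] j by (simp add: nth_append)
    next
      case 3
      have "?y ! j = u' ! t" using 3 by (simp add: nth_append)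
      thus ?thesis using lhs letters c_nth[of j] c_nth[of "Suc j"] j 3 by (simp add: nth_append)
    qed
  qed simp
  finally show ?thesis .
qed

lemma Pi_Phi_e_Psi:
  assumes uu: "u @ u' \<in> D"
  shows "map (lmap Phi) u @ [e] @ map (lmap Psi) u' \<in> D \<and>
         Pi (map (lmap Phi) u @ [e] @ map (lmap Psi) u') = Pi [lmap Phi (Pi (u @ u')), e]"
proof -
  let ?c = "replicate (Suc (length u)) 0 @ replicate (Suc (length u')) (1::nat)"
  let ?y = "u @ [one] @ u'" and ?k = "Suc (length u + length u')"
  have c: "?c \<in> dsimp 1 ?k" using replicate_01_in_dsimp[of "Suc (length u)" ?k] by simp
  have y: "?y \<in> Dk G ?k" using insert_one[OF uu] by (simp add: Dk_def)
  have Fy: "F ?c ?y = map (lmap Phi) u @ [e] @ map (lmap Psi) u'"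
    using F_split insert_one[OF uu] lmap_one[OF Phi] Pi_one_left[OF e_in_M] by simp
  have "[Pi (F ?c ?y)] = F [0, 1] [Pi (u @ u')]"
    using smap_Pi[OF F_smap c y] insert_one[OF uu] by simp
  thus ?thesis using F_edge_letter_Phi[OF Pi_in_M[OF uu]] smap_Dk[OF F_smap c y] Fy by (simp add: Dk_def)
qed

lemma conj_letter_eq:
  assumes x: "x \<in> M"
  shows "[e, x, iv e] \<in> D \<and> Pi [e, x, iv e] = lmap Phi (lmap (aut_inv Psi) x)"
proof -
  define y where "y = lmap (aut_inv Psi) x"
  have y: "y \<in> M" "lmap Psi y = x"
    using AutSet_singleton[OF aut_inv_AutSet[OF Psi] x] lmap_aut_inv[OF Psi x] unfolding y_def by auto
  define c where "c = lmap Phi y"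
  have c: "c \<in> M" "lmap Phi (iv y) = iv c"
    using AutSet_singleton[OF Phi y(1)] lmap_iv[OF Phi y(1)] unfolding c_def by auto
  have "[iv c, e, x] \<in> D" "Pi [iv c, e, x] = e"
    using Pi_Phi_e_Psi[of "[iv y]" "[y]"] Pi_iv_left[OF y(1)] c y lmap_one[OF Phi] Pi_one_left[OF e_in_M]
    by auto
  hence "[iv c] @ [e, x, iv e] \<in> D" using append_iv_Pi_in_D by fastforce
  hence exe: "[e, x, iv e] \<in> D" using append_in_D by blast
  have "Pi [e, x, iv e] = Pi ([] @ [Pi [c, e]] @ [iv e])"
    using Pi_collapse[of "[]" "[e, x]" "[iv e]"] exe Phi_e_eq_e_Psi[OF y(1)] y unfolding c_def by simp
  also have "\<dots> = c" using Pi_cancel_right[of c e] F_edge_letter_Phi[OF y(1)] unfolding c_def by simp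
  finally show ?thesis using exe unfolding c_def y_def by simp
qed

lemma Pi_conj_word:
  assumes w: "w \<in> D" and i: "i \<le> length w"
  shows "conj_word G e i w \<in> D \<and> Pi (conj_word G e i w) = Pi [lmap Phi (Pi (aut_inv Psi w)), e]"
proof -
  let ?v = "aut_inv Psi w"
  have v: "?v \<in> D" "?v = map (lmap (aut_inv Psi)) w"
    using aut_inv_inverse[OF Psi w] AutSet_letterwise[OF aut_inv_AutSet[OF Psi] w] by (auto simp: Dk_def)
  have wM: "x \<in> set w \<Longrightarrow> x \<in> M" for x using in_D_in_M[OF w] .
  have "map (lmap Phi) (take i ?v) = map (\<lambda>x. Pi [e, x, iv e]) (take i w)"
    unfolding v(2) take_map map_map comp_def using conj_letter_eq wM by (auto dest: in_set_takeD)
  moreover have "map (lmap Psi) (drop i ?v) = drop i w"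
    unfolding v(2) drop_map map_map comp_def
    by (rule map_idI) (use lmap_aut_inv(1)[OF Psi] wM in \<open>auto dest: in_set_dropD\<close>)
  ultimately show ?thesis
    using Pi_Phi_e_Psi[of "take i ?v" "drop i ?v"] v(1) unfolding conj_word_def by simp
qed

theorem e_in_normalizer: "e \<in> normalizer G"
  unfolding normalizer_def
proof (intro CollectI conjI ballI allI impI)
  have P: "aut_comp G Phi (aut_inv Psi) \<in> AutSet G" using aut_comp_AutSet[OF Phi aut_inv_AutSet[OF Psi]] .
  show "\<exists>P\<in>AutSet G. \<forall>x\<in>M. P [x] = [Pi [e, x, iv e]]"
    using AutSet_singleton[OF P] lmap_aut_comp[OF Phi aut_inv_AutSet[OF Psi]] conj_letter_eq P by auto
qed (use e_in_M conj_letter_eq Pi_conj_word in metis)+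

text \<open>The preimage of \<open>v\<close> under \<open>F\<close> over the simplex of \<open>\<Delta>[1]\<close> jumping at \<open>p\<close> is the
  pull-back along \<open>\<Phi>\<close> of this word: \<open>v\<close> before \<open>p\<close>, \<open>v\<^sub>p e\<^sup>-\<^sup>1\<close> at \<open>p\<close> and
  \<open>e v\<^sub>j e\<^sup>-\<^sup>1 = \<Phi>(\<Psi>\<^sup>-\<^sup>1(v\<^sub>j))\<close> after \<open>p\<close>.\<close>

lemma jump_preimage_in_D:
  assumes v: "v \<in> Dk G k" and p: "p < k"
  shows "take p v @ [Pi [v ! p, iv e]] @ map (\<lambda>x. Pi [e, x, iv e]) (drop (Suc p) v) \<in> D \<and> [v ! p, iv e] \<in> D"
proof -
  let ?cj = "\<lambda>x. Pi [e, x, iv e]"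
  have vD: "v \<in> D" and lv: "length v = k" using v by (auto simp: Dk_def)
  have vM: "x \<in> set v \<Longrightarrow> x \<in> M" for x using in_D_in_M[OF vD] .
  have vp: "v ! p \<in> M" using vM p lv by simp
  have W: "word_inv v \<in> D" "length (word_inv v) = k" using word_inv_in_D[OF vD] lv by (auto simp: word_inv_def)
  have "take (k - Suc p) (word_inv v) = word_inv (drop (Suc p) v)"
    unfolding word_inv_def using lv p by (simp add: take_rev drop_map)
  moreover have "drop (k - Suc p) (word_inv v) = iv (v ! p) # word_inv (take p v)"
    unfolding word_inv_def using lv p by (simp add: drop_rev take_Suc_conv_app_nth take_map)
  ultimately have "map ?cj (word_inv (drop (Suc p) v)) @ [e, iv (v ! p)] @ word_inv (take p v) \<in> D"
    using Pi_conj_word[OF W(1), of "k - Suc p"] W(2) unfolding conj_word_def by simp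
  hence ev: "[e, iv (v ! p)] \<in> D"
    and "map ?cj (word_inv (drop (Suc p) v)) @ [Pi [e, iv (v ! p)]] @ word_inv (take p v) \<in> D"
    using infix_in_D collapse_in_D by blast+
  from word_inv_in_D[OF this(2)]
  have "word_inv (word_inv (take p v)) @ [iv (Pi [e, iv (v ! p)])] @ word_inv (map ?cj (word_inv (drop (Suc p) v))) \<in> D"
    by (simp add: word_inv_append word_inv_Cons)
  moreover have "word_inv (word_inv (take p v)) = take p v"
    by (rule word_inv_word_inv) (use vM in \<open>auto dest: in_set_takeD\<close>)
  moreover have "iv (Pi [e, iv (v ! p)]) = Pi [v ! p, iv e]"
    using Pi_word_inv[OF ev] vp by (simp add: word_inv_def)
  moreover have "word_inv (map ?cj (word_inv (drop (Suc p) v))) = map ?cj (drop (Suc p) v)"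
  proof -
    have "iv (?cj (iv x)) = ?cj x" if "x \<in> M" for x
      using Pi_word_inv[of "[e, iv x, iv e]"] conj_letter_eq[OF iv_in_M[OF that]] that e_in_M
      by (simp add: word_inv_def)
    thus ?thesis unfolding word_inv_def using vM
      by (auto simp: rev_map comp_def dest: in_set_dropD intro!: map_cong)
  qed
  ultimately show ?thesis using word_inv_in_D[OF ev] vp by (simp add: word_inv_def)
qed

lemma F_jump:
  assumes y: "y \<in> Dk G k" and p: "p < k"
  shows "F (replicate (Suc p) 0 @ replicate (k - p) 1) y =
         map (lmap Phi) (take p y) @ [Pi [lmap Phi (y ! p), e]] @ map (lmap Psi) (drop (Suc p) y)"
proof -
  have ly: "length y = k" using y by (simp add: Dk_def)
  have "y = take p y @ [y ! p] @ drop (Suc p) y" using id_take_nth_drop[of p y] p ly by simp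
  moreover have "k - p = Suc (length (drop (Suc p) y))" using ly p by simp
  ultimately show ?thesis using F_split[of "take p y" "y ! p" "drop (Suc p) y"] y ly p
    by (simp add: Dk_def del: replicate_Suc)
qed

lemma F_jump_inj:
  assumes p: "p < k"
  shows "inj_on (F (replicate (Suc p) 0 @ replicate (k - p) 1)) (Dk G k)"
proof (rule inj_onI)
  let ?c = "replicate (Suc p) 0 @ replicate (k - p) (1::nat)"
  fix y y' assume y: "y \<in> Dk G k" and y': "y' \<in> Dk G k" and eq: "F ?c y = F ?c y'"
  have yM: "set y \<subseteq> M" "set y' \<subseteq> M" using y y' in_D_in_M by (auto simp: Dk_def)
  have ly: "length y = k" "length y' = k" using y y' by (auto simp: Dk_def)
  have "map (lmap Phi) (take p y) = map (lmap Phi) (take p y') \<and>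
        [Pi [lmap Phi (y ! p), e]] @ map (lmap Psi) (drop (Suc p) y) =
        [Pi [lmap Phi (y' ! p), e]] @ map (lmap Psi) (drop (Suc p) y')"
    by (rule append_eq_append_conv[THEN iffD1]) (use eq F_jump[OF y p] F_jump[OF y' p] ly in simp_all)
  hence take_eq: "map (lmap Phi) (take p y) = map (lmap Phi) (take p y')"
    and Pi_eq: "Pi [lmap Phi (y ! p), e] = Pi [lmap Phi (y' ! p), e]"
    and drop_eq: "map (lmap Psi) (drop (Suc p) y) = map (lmap Psi) (drop (Suc p) y')"
    by simp_all
  have yp: "y ! p \<in> M" "y' ! p \<in> M" using yM ly p nth_mem by (metis subsetD)+
  have "lmap Phi (y ! p) = lmap Phi (y' ! p)"
    using Pi_right_cancel[OF _ _ Pi_eq] F_edge_letter_Phi yp by blast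
  hence "y ! p = y' ! p" using lmap_inj[OF Phi] yp by blast
  moreover have "take p y = take p y'"
    using map_inj_on[OF take_eq inj_on_subset[OF inj_on_lmap[OF Phi]]] yM set_take_subset
    by (metis le_sup_iff subset_trans)
  moreover have "drop (Suc p) y = drop (Suc p) y'"
    using map_inj_on[OF drop_eq inj_on_subset[OF inj_on_lmap[OF Psi]]] yM set_drop_subset
    by (metis le_sup_iff subset_trans)
  ultimately show "y = y'" using id_take_nth_drop[of p y] id_take_nth_drop[of p y'] ly p by metis
qed

lemma F_jump_surj:
  assumes p: "p < k" and v: "v \<in> Dk G k"
  shows "\<exists>y\<in>Dk G k. F (replicate (Suc p) 0 @ replicate (k - p) 1) y = v"
proof -
  have lv: "length v = k" and vM: "set v \<subseteq> M" using v in_D_in_M by (auto simp: Dk_def)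
  define zz where "zz = take p v @ [Pi [v ! p, iv e]] @ map (\<lambda>x. Pi [e, x, iv e]) (drop (Suc p) v)"
  have zz: "zz \<in> D" "[v ! p, iv e] \<in> D" using jump_preimage_in_D[OF v p] unfolding zz_def by auto
  define y where "y = aut_inv Phi zz"
  have "length zz = k" unfolding zz_def using lv p by simp
  hence y: "y \<in> Dk G k" "y = map (lmap (aut_inv Phi)) zz"
    using aut_inv_inverse[OF Phi zz(1)] AutSet_letterwise[OF aut_inv_AutSet[OF Phi] zz(1)]
    unfolding y_def by auto
  have "map (lmap Phi) (take p y) = take p v"
    using y(2) lv p vM lmap_aut_inv(1)[OF Phi] unfolding zz_def
    by (auto simp: take_map intro!: map_idI dest: in_set_takeD)
  moreover have "Pi [lmap Phi (y ! p), e] = v ! p"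
    using y(2) lv p lmap_aut_inv(1)[OF Phi Pi_in_M[OF zz(2)]] Pi_cancel_right[OF zz(2)] e_in_M
    unfolding zz_def by (simp add: nth_append)
  moreover have "map (lmap Psi) (drop (Suc p) y) = drop (Suc p) v"
  proof -
    have "lmap Psi (lmap (aut_inv Phi) (Pi [e, x, iv e])) = x" if "x \<in> M" for x
      using conj_letter_eq[OF that] lmap_aut_inv(2)[OF Phi] lmap_aut_inv(1)[OF Psi that]
        AutSet_singleton[OF aut_inv_AutSet[OF Psi] that] by simp
    thus ?thesis using y(2) lv p subsetD[OF vM] unfolding zz_def
      by (auto simp: drop_map intro!: map_idI dest!: in_set_dropD)
  qed
  ultimately show ?thesis using F_jump[OF y(1) p] id_take_nth_drop[of p v] lv p y(1) by auto
qed

lemma F_bij: "c \<in> dsimp 1 k \<Longrightarrow> bij_betw (F c) (Dk G k) (Dk G k)"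
proof -
  assume "c \<in> dsimp 1 k"
  then obtain z where z: "z \<le> Suc k" "c = replicate z 0 @ replicate (Suc k - z) 1"
    using dsimp1_eq_replicate by blast
  consider "z = 0" | "z = Suc k" | p where "z = Suc p" "p < k" using z(1) by (cases z) (auto simp: le_eq_less_or_eq)
  thus ?thesis
  proof cases
    case 1 thus ?thesis using z F_at_1 AutSet_bij[OF Psi] bij_betw_cong by (metis append_Nil diff_zero replicate_0)
  next
    case 2 thus ?thesis using z F_at_0 AutSet_bij[OF Phi] bij_betw_cong by (metis append_Nil2 diff_self_eq_0 replicate_0)
  next
    case 3
    have c: "c = replicate (Suc p) 0 @ replicate (k - p) 1" using z 3 by simp
    have "F c ` Dk G k \<subseteq> Dk G k" using smap_Dk[OF F_smap] \<open>c \<in> dsimp 1 k\<close> by blast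
    moreover have "Dk G k \<subseteq> F c ` Dk G k" using F_jump_surj[OF 3(2)] unfolding c by (auto simp: image_iff)
    ultimately show ?thesis using F_jump_inj[OF 3(2)] unfolding bij_betw_def c by blast
  qed
qed

end

section \<open>Gluing a simplex of the nerve\<close>

definition step01 :: "nat \<Rightarrow> nat \<Rightarrow> nat" where
  "step01 m x = (if x \<le> m then 0 else 1)"

lemma dsimp_step01: "a \<in> dsimp n k \<Longrightarrow> map (step01 m) a \<in> dsimp 1 k"
  by (rule dsimp_map) (auto simp: mono_def step01_def)

lemma dsimp_max: "a \<in> dsimp n k \<Longrightarrow> m < n \<Longrightarrow> map (max (Suc m)) a \<in> dsimp n k"
  by (rule dsimp_map) (auto simp: mono_def)

locale nerve_simplex = partial_grp +
  fixes n Ps es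
  assumes simplex: "(Ps, es) \<in> sg_car (nerve_Aut G) n"
begin

lemma length_Ps: "length Ps = Suc n"
  using simplex unfolding nerve_Aut_def by simp

lemma length_es: "length es = n"
  using simplex unfolding nerve_Aut_def by simp

lemma Ps_AutSet: "j \<le> n \<Longrightarrow> Ps ! j \<in> AutSet G"
  using simplex length_Ps unfolding nerve_Aut_def by (auto simp: subset_iff)

definition edge_homotopy :: "nat \<Rightarrow> nat list \<Rightarrow> 'a list \<Rightarrow> 'a list" where
  "edge_homotopy m = (SOME F. is_homotopy (Ps ! m) (Ps ! Suc m) (es ! m) F)"

lemma aut_homotopy_edge: "m < n \<Longrightarrow> aut_homotopy G (Ps ! m) (Ps ! Suc m) (es ! m) (edge_homotopy m)"
  using simplex someI_ex[of "is_homotopy (Ps ! m) (Ps ! Suc m) (es ! m)"] Ps_AutSet partial_grp_axioms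
  unfolding edge_homotopy_def aut_homotopy_def aut_homotopy_axioms_def nerve_Aut_def
  by (auto simp: aut_hom_iff)

text \<open>The simplex over \<open>a = (a\<^sub>0 \<le> \<dots> \<le> a\<^sub>k)\<close> is built by induction on \<open>a\<^sub>k - a\<^sub>0\<close>: lift
  every entry \<open>\<le> a\<^sub>0\<close> to \<open>a\<^sub>0 + 1\<close>, undo \<open>\<Psi>\<^bsub>a\<^sub>0\<^sub>+\<^sub>1\<^esub>\<close> and then apply the homotopy of the edge
  \<open>a\<^sub>0 \<rightarrow> a\<^sub>0 + 1\<close> over the image of \<open>a\<close> under \<open>[n] \<rightarrow> [1]\<close> collapsing at \<open>a\<^sub>0\<close>.\<close>

function glue :: "nat list \<Rightarrow> 'a list \<Rightarrow> 'a list" where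
  "glue a w =
     (if a \<noteq> [] \<and> hd a < last a
      then edge_homotopy (hd a) (map (step01 (hd a)) a)
             (aut_inv (Ps ! Suc (hd a)) (glue (map (max (Suc (hd a))) a) w))
      else (Ps ! hd a) w)"
  by pat_completeness auto
termination
  by (relation "measure (\<lambda>(a, w). last a - hd a)") (auto simp: hd_map last_map diff_less_mono2)

declare glue.simps [simp del]

lemma glue_const: "a \<noteq> [] \<Longrightarrow> \<not> hd a < last a \<Longrightarrow> glue a w = (Ps ! hd a) w"
  by (simp add: glue.simps)

lemma glue_step:
  "a \<noteq> [] \<Longrightarrow> hd a < last a \<Longrightarrow>
   glue a w = edge_homotopy (hd a) (map (step01 (hd a)) a)
                (aut_inv (Ps ! Suc (hd a)) (glue (map (max (Suc (hd a))) a) w))"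
  by (simp add: glue.simps)

lemma glue_in_Dk: "a \<in> dsimp n k \<Longrightarrow> w \<in> Dk G k \<Longrightarrow> glue a w \<in> Dk G k"
proof (induct a w rule: glue.induct)
  case (1 a w)
  have ne: "a \<noteq> []" using dsimp_not_Nil 1(2) .
  show ?case
  proof (cases "hd a < last a")
    case True
    let ?m = "hd a"
    have m: "?m < n" using True dsimp_last_le[OF 1(2)] by simp
    interpret H: aut_homotopy G "Ps ! ?m" "Ps ! Suc ?m" "es ! ?m" "edge_homotopy ?m"
      using aut_homotopy_edge[OF m] .
    have "glue (map (max (Suc ?m)) a) w \<in> Dk G k"
      using 1(1)[OF conjI[OF ne True] dsimp_max[OF 1(2) m] 1(3)] .
    hence "aut_inv (Ps ! Suc ?m) (glue (map (max (Suc ?m)) a) w) \<in> Dk G k"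
      using AutSet_Dk[OF aut_inv_AutSet[OF Ps_AutSet]] m by simp
    thus ?thesis using glue_step[OF ne True] smap_Dk[OF H.F_smap dsimp_step01[OF 1(2)]] by simp
  next
    case False
    thus ?thesis using glue_const[OF ne False] AutSet_Dk[OF Ps_AutSet[OF dsimp_hd_le[OF 1(2)]] 1(3)] by simp
  qed
qed

text \<open>The recursion equation of \<open>glue\<close> still holds for any \<open>m < n\<close> below the simplex: if
  \<open>m < a\<^sub>0\<close>, the homotopy is evaluated at its end \<open>\<Psi>\<^bsub>m+1\<^esub>\<close>, and if \<open>a\<close> is constant \<open>m\<close>, at its
  start \<open>\<Psi>\<^bsub>m\<^esub>\<close>.\<close>

lemma glue_below:
  assumes a: "a \<in> dsimp n k" and w: "w \<in> Dk G k" and m: "m < n" and am: "\<forall>x\<in>set a. m \<le> x"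
  shows "glue a w = edge_homotopy m (map (step01 m) a) (aut_inv (Ps ! Suc m) (glue (map (max (Suc m)) a) w))"
proof -
  interpret H: aut_homotopy G "Ps ! m" "Ps ! Suc m" "es ! m" "edge_homotopy m"
    using aut_homotopy_edge[OF m] .
  have ne: "a \<noteq> []" and la: "length a = Suc k" and s: "sorted a"
    using dsimp_not_Nil dsimp_length dsimp_sorted a by auto
  have P: "Ps ! Suc m \<in> AutSet G" using Ps_AutSet m by simp
  have "m \<le> hd a" using am ne by simp
  then consider "m < hd a" | "hd a = m" "hd a < last a" | "hd a = m" "\<not> hd a < last a"
    using le_neq_implies_less by blast
  thus ?thesis
  proof cases
    case 1
    hence all: "\<forall>x\<in>set a. m < x" using sorted_hd_le[OF s] by (meson order_less_le_trans)
    have "map (step01 m) a = map (\<lambda>_. 1) a" using all by (auto simp: step01_def)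
    hence "map (step01 m) a = replicate (Suc k) 1" using la by (simp add: map_replicate_const del: replicate_Suc)
    moreover have "map (max (Suc m)) a = a" using all by (intro map_idI) (simp add: max_def Suc_le_eq)
    moreover have "edge_homotopy m (replicate (Suc k) 1) (aut_inv (Ps ! Suc m) (glue a w)) = glue a w"
      using H.F_at_1[OF AutSet_Dk[OF aut_inv_AutSet[OF P] glue_in_Dk[OF a w]]]
        aut_inv_inverse[OF P] glue_in_Dk[OF a w] by (simp add: Dk_def)
    ultimately show ?thesis by simp
  next
    case 2 thus ?thesis using glue_step[OF ne] by simp
  next
    case 3
    have ac: "a = replicate (Suc k) m" using sorted_eq_replicate_hd[OF s ne 3(2)] 3(1) la by simp
    have "glue (replicate (Suc k) (Suc m)) w = (Ps ! Suc m) w" using glue_const[of "replicate (Suc k) (Suc m)"] by simp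
    moreover have "aut_inv (Ps ! Suc m) ((Ps ! Suc m) w) = w" using aut_inv_inverse[OF P] w by (simp add: Dk_def)
    ultimately show ?thesis
      using ac H.F_at_0[OF w] glue_const[OF ne 3(2)] 3(1) by (simp add: step01_def)
  qed
qed

lemma glue_natural:
  fixes \<sigma> :: "nat list \<Rightarrow> nat list" and \<tau> :: "'a list \<Rightarrow> 'a list"
  assumes \<sigma>_dsimp: "\<And>m a. a \<in> dsimp m k \<Longrightarrow> \<sigma> a \<in> dsimp m k'"
    and \<sigma>_set: "\<And>a. set (\<sigma> a) \<subseteq> set a"
    and \<sigma>_map: "\<And>f a. \<sigma> (map f a) = map f (\<sigma> a)"
    and \<sigma>_replicate: "\<And>x. \<sigma> (replicate (Suc k) x) = replicate (Suc k') x"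
    and \<tau>_Dk: "\<And>w. w \<in> Dk G k \<Longrightarrow> \<tau> w \<in> Dk G k'"
    and \<tau>_AutSet: "\<And>P w. P \<in> AutSet G \<Longrightarrow> w \<in> Dk G k \<Longrightarrow> P (\<tau> w) = \<tau> (P w)"
    and \<tau>_smap: "\<And>m F a w. prod_smap G m F \<Longrightarrow> a \<in> dsimp m k \<Longrightarrow> w \<in> Dk G k \<Longrightarrow> F (\<sigma> a) (\<tau> w) = \<tau> (F a w)"
  shows "a \<in> dsimp n k \<Longrightarrow> w \<in> Dk G k \<Longrightarrow> glue (\<sigma> a) (\<tau> w) = \<tau> (glue a w)"
proof (induct a w rule: glue.induct)
  case (1 a w)
  have ne: "a \<noteq> []" and s: "sorted a" using dsimp_not_Nil dsimp_sorted 1(2) by auto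
  show ?case
  proof (cases "hd a < last a")
    case True
    let ?m = "hd a"
    have m: "?m < n" using True dsimp_last_le[OF 1(2)] by simp
    interpret H: aut_homotopy G "Ps ! ?m" "Ps ! Suc ?m" "es ! ?m" "edge_homotopy ?m"
      using aut_homotopy_edge[OF m] .
    let ?P = "aut_inv (Ps ! Suc ?m)" and ?a' = "map (max (Suc ?m)) a"
    have P: "?P \<in> AutSet G" using aut_inv_AutSet[OF Ps_AutSet] m by simp
    have a': "?a' \<in> dsimp n k" using dsimp_max[OF 1(2) m] .
    have v: "glue ?a' w \<in> Dk G k" using glue_in_Dk[OF a' 1(3)] .
    have "\<forall>x\<in>set (\<sigma> a). ?m \<le> x" using \<sigma>_set sorted_hd_le[OF s] by blast
    hence "glue (\<sigma> a) (\<tau> w) = edge_homotopy ?m (\<sigma> (map (step01 ?m) a)) (?P (glue (\<sigma> ?a') (\<tau> w)))"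
      using glue_below[OF \<sigma>_dsimp[OF 1(2)] \<tau>_Dk[OF 1(3)] m] by (simp add: \<sigma>_map)
    also have "\<dots> = edge_homotopy ?m (\<sigma> (map (step01 ?m) a)) (\<tau> (?P (glue ?a' w)))"
      using 1(1)[OF conjI[OF ne True] a' 1(3)] \<tau>_AutSet[OF P v] by simp
    also have "\<dots> = \<tau> (glue a w)"
      using \<tau>_smap[OF H.F_smap dsimp_step01[OF 1(2)] AutSet_Dk[OF P v]] glue_step[OF ne True] by simp
    finally show ?thesis .
  next
    case False
    have "a = replicate (Suc k) (hd a)" using sorted_eq_replicate_hd[OF s ne False] dsimp_length[OF 1(2)] by simp
    hence "\<sigma> a = replicate (Suc k') (hd a)" using \<sigma>_replicate by metis
    hence "glue (\<sigma> a) (\<tau> w) = (Ps ! hd a) (\<tau> w)"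
      using glue_const[of "\<sigma> a"] by (simp del: replicate_Suc)
    thus ?thesis using glue_const[OF ne False] \<tau>_AutSet[OF Ps_AutSet[OF dsimp_hd_le[OF 1(2)]] 1(3)] by simp
  qed
qed

lemma glue_face:
  assumes "a \<in> dsimp n (Suc k)" "w \<in> Dk G (Suc k)" "i \<le> Suc k"
  shows "glue (ldel i a) (wface G (Suc k) i w) = wface G (Suc k) i (glue a w)"
  by (rule glue_natural[where k'=k, OF _ set_ldel_subset ldel_map _ _ _ _ assms(1,2)])
    (use assms(3) in \<open>auto simp: dsimp_ldel ldel_replicate wface_in_Dk AutSet_face smap_face
      simp del: replicate_Suc\<close>)

lemma glue_deg:
  assumes "a \<in> dsimp n k" "w \<in> Dk G k" "i \<le> k"
  shows "glue (ldup i a) (wdeg G i w) = wdeg G i (glue a w)"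
  by (rule glue_natural[where k'="Suc k", OF _ set_ldup_subset ldup_map _ _ _ _ assms(1,2)])
    (use assms(3) in \<open>auto simp: dsimp_ldup ldup_replicate wdeg_in_Dk AutSet_deg smap_deg
      simp del: replicate_Suc\<close>)

lemma glue_bij: "a \<in> dsimp n k \<Longrightarrow> bij_betw (glue a) (Dk G k) (Dk G k)"
proof (induct "last a - hd a" arbitrary: a rule: less_induct)
  case less
  have ne: "a \<noteq> []" using dsimp_not_Nil less(2) .
  show ?case
  proof (cases "hd a < last a")
    case True
    let ?m = "hd a"
    have m: "?m < n" using True dsimp_last_le[OF less(2)] by simp
    interpret H: aut_homotopy G "Ps ! ?m" "Ps ! Suc ?m" "es ! ?m" "edge_homotopy ?m"
      using aut_homotopy_edge[OF m] .
    let ?a' = "map (max (Suc ?m)) a"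
    have "last ?a' - hd ?a' < last a - hd a" using ne True by (simp add: hd_map last_map diff_less_mono2)
    hence "bij_betw (glue ?a') (Dk G k) (Dk G k)" using less(1)[OF _ dsimp_max[OF less(2) m]] by simp
    moreover have "bij_betw (aut_inv (Ps ! Suc ?m)) (Dk G k) (Dk G k)"
      using AutSet_bij[OF aut_inv_AutSet[OF Ps_AutSet]] m by simp
    ultimately have "bij_betw (edge_homotopy ?m (map (step01 ?m) a) \<circ> (aut_inv (Ps ! Suc ?m) \<circ> glue ?a'))
        (Dk G k) (Dk G k)"
      by (rule bij_betw_trans[OF bij_betw_trans H.F_bij[OF dsimp_step01[OF less(2)]]])
    moreover have "glue a = edge_homotopy ?m (map (step01 ?m) a) \<circ> (aut_inv (Ps ! Suc ?m) \<circ> glue ?a')"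
      using glue_step[OF ne True] by (intro ext) simp
    ultimately show ?thesis by simp
  next
    case False
    hence "glue a = Ps ! hd a" using glue_const[OF ne] by (intro ext) simp
    thus ?thesis using AutSet_bij[OF Ps_AutSet[OF dsimp_hd_le[OF less(2)]]] by simp
  qed
qed

definition glued :: "nat list \<Rightarrow> 'a list \<Rightarrow> 'a list" where
  "glued = (\<lambda>a w. if prod_valid G n a w then glue a w else undefined)"

lemma aut_elem_glued: "aut_elem G n glued"
  unfolding glued_def by (rule aut_elem_restrictI) (auto intro: glue_in_Dk glue_face glue_deg glue_bij)

lemma glued_vertex: "j \<le> n \<Longrightarrow> w \<in> D \<Longrightarrow> glued (replicate (Suc (length w)) j) w = (Ps ! j) w"
  unfolding glued_def using prod_validI[OF replicate_in_dsimp] glue_const[of "replicate (Suc (length w)) j"]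
  by (simp add: Dk_def)

lemma glued_edge:
  assumes i: "i < n"
  shows "glued [i, Suc i] [one] = [es ! i]"
proof -
  interpret H: aut_homotopy G "Ps ! i" "Ps ! Suc i" "es ! i" "edge_homotopy i"
    using aut_homotopy_edge[OF i] .
  have P: "Ps ! Suc i \<in> AutSet G" using Ps_AutSet i by simp
  have "glue [Suc i, Suc i] [one] = [one]" using glue_const[of "[Suc i, Suc i]"] AutSet_one[OF P] by simp
  moreover have "aut_inv (Ps ! Suc i) [one] = [one]"
    using aut_inv_eqI[OF P singleton_in_D[OF one_in_M] AutSet_one[OF P]] .
  ultimately have "glue [i, Suc i] [one] = [es ! i]"
    using glue_step[of "[i, Suc i]" "[one]"] H.F_edge_one by (simp add: step01_def)
  thus ?thesis
    unfolding glued_def using prod_validI[OF edge_in_dsimp singleton_in_Dk[OF one_in_M]] i by simp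
qed

end

section \<open>The vertices and edges of a simplex of aut\<close>

context partial_grp
begin

definition reindex :: "nat \<Rightarrow> (nat \<Rightarrow> nat) \<Rightarrow> (nat list \<Rightarrow> 'a list \<Rightarrow> 'a list) \<Rightarrow> nat list \<Rightarrow> 'a list \<Rightarrow> 'a list" where
  "reindex n f F = (\<lambda>a w. if prod_valid G n a w then F (map f a) w else undefined)"

lemma aut_elem_reindex:
  assumes F: "aut_elem G m F" and f: "mono f" and fn: "\<forall>x\<le>n. f x \<le> m"
  shows "aut_elem G n (reindex n f F)"
  unfolding reindex_def
proof (rule aut_elem_restrictI)
  note Fs = aut_elem_smap[OF F] and fa = dsimp_map[OF _ f fn]
  fix k a w i assume "a \<in> dsimp n (Suc k)" "w \<in> Dk G (Suc k)" "i \<le> Suc k"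
  thus "F (map f (ldel i a)) (wface G (Suc k) i w) = wface G (Suc k) i (F (map f a) w)"
    using smap_face[OF Fs fa] by (simp add: ldel_map)
next
  note Fs = aut_elem_smap[OF F] and fa = dsimp_map[OF _ f fn]
  fix k a w i assume "a \<in> dsimp n k" "w \<in> Dk G k" "i \<le> k"
  thus "F (map f (ldup i a)) (wdeg G i w) = wdeg G i (F (map f a) w)"
    using smap_deg[OF Fs fa] by (simp add: ldup_map)
qed (use smap_Dk[OF aut_elem_smap[OF F] dsimp_map[OF _ f fn]] aut_elem_bij[OF F dsimp_map[OF _ f fn]] in auto)

lemma reindex_valid: "a \<in> dsimp n k \<Longrightarrow> w \<in> Dk G k \<Longrightarrow> reindex n f F a w = F (map f a) w"
  unfolding reindex_def using prod_validI by simp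

definition vertex_aut :: "(nat list \<Rightarrow> 'a list \<Rightarrow> 'a list) \<Rightarrow> nat \<Rightarrow> 'a list \<Rightarrow> 'a list" where
  "vertex_aut F j = (\<lambda>w. if w \<in> D then F (replicate (Suc (length w)) j) w else undefined)"

definition edge_elem :: "(nat list \<Rightarrow> 'a list \<Rightarrow> 'a list) \<Rightarrow> nat \<Rightarrow> 'a" where
  "edge_elem F i = hd (F [i, Suc i] [one])"

definition simplex_of :: "nat \<Rightarrow> (nat list \<Rightarrow> 'a list \<Rightarrow> 'a list) \<Rightarrow> ('a list \<Rightarrow> 'a list) list \<times> 'a list" where
  "simplex_of n F = (map (vertex_aut F) [0..<Suc n], map (edge_elem F) [0..<n])"

lemma vertex_aut_eq: "w \<in> Dk G k \<Longrightarrow> vertex_aut F j w = F (replicate (Suc k) j) w"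
  unfolding vertex_aut_def by (simp add: Dk_def)

lemma vertex_aut_singleton: "x \<in> M \<Longrightarrow> vertex_aut F j [x] = F [j, j] [x]"
  unfolding vertex_aut_def using singleton_in_D by (simp add: numeral_2_eq_2)

lemma vertex_aut_AutSet:
  assumes F: "aut_elem G n F" and j: "j \<le> n"
  shows "vertex_aut F j \<in> AutSet G"
proof -
  have "(\<lambda>w. if w \<in> D then F (replicate (Suc (length w)) j) w else undefined) \<in> AutSet G"
  proof (rule AutSet_restrictI)
    fix k show "bij_betw (\<lambda>w. F (replicate (Suc (length w)) j) w) (Dk G k) (Dk G k)"
      using aut_elem_bij[OF F replicate_in_dsimp[OF j]] by (rule bij_betw_cong[THEN iffD1, rotated]) (simp add: Dk_def)
  next
    fix k w i assume w: "w \<in> Dk G (Suc k)" and i: "i \<le> Suc k"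
    have "length (wface G (Suc k) i w) = k" "length w = Suc k"
      using wface_in_Dk[OF w i] w by (simp_all add: Dk_def)
    moreover have "ldel i (replicate (Suc (Suc k)) j) = replicate (Suc k) j"
      using ldel_replicate[of i "Suc k" j] i by simp
    ultimately show "F (replicate (Suc (length (wface G (Suc k) i w))) j) (wface G (Suc k) i w) =
          wface G (Suc k) i (F (replicate (Suc (length w)) j) w)"
      using smap_face[OF aut_elem_smap[OF F] replicate_in_dsimp[OF j] w i] by (simp del: replicate_Suc)
  next
    fix k w i assume w: "w \<in> Dk G k" and i: "i \<le> k"
    have "length (wdeg G i w) = Suc k" "length w = k"
      using wdeg_in_Dk[OF w i] w by (simp_all add: Dk_def)
    moreover have "ldup i (replicate (Suc k) j) = replicate (Suc (Suc k)) j"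
      using ldup_replicate[of i k j] i by simp
    ultimately show "F (replicate (Suc (length (wdeg G i w))) j) (wdeg G i w) =
          wdeg G i (F (replicate (Suc (length w)) j) w)"
      using smap_deg[OF aut_elem_smap[OF F] replicate_in_dsimp[OF j] w i] by (simp del: replicate_Suc)
  qed
  thus ?thesis unfolding vertex_aut_def .
qed

lemma edge_elem_singleton:
  assumes F: "prod_smap G n F" and i: "i < n"
  shows "F [i, Suc i] [one] = [edge_elem F i] \<and> edge_elem F i \<in> M"
proof -
  have "F [i, Suc i] [one] \<in> Dk G (Suc 0)"
    using smap_Dk[OF F edge_in_dsimp singleton_in_Dk[OF one_in_M]] i by simp
  thus ?thesis using Dk1_iff unfolding edge_elem_def by auto
qed

text \<open>\<open>reindex 1 (\<lambda>x. x + i) F\<close> is the restriction of \<open>F\<close> to the edge \<open>i \<rightarrow> i + 1\<close>.\<close>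

lemma aut_homotopy_restrict_edge:
  assumes F: "aut_elem G n F" and i: "i < n"
  shows "aut_homotopy G (vertex_aut F i) (vertex_aut F (Suc i)) (edge_elem F i) (reindex 1 (\<lambda>x. x + i) F)"
proof -
  have shift: "mono (\<lambda>x. x + i)" "\<forall>x\<le>1. x + i \<le> n" using i by (auto simp: mono_def)
  have "is_homotopy (vertex_aut F i) (vertex_aut F (Suc i)) (edge_elem F i) (reindex 1 (\<lambda>x. x + i) F)"
    unfolding is_homotopy_def
    using aut_elem_smap[OF aut_elem_reindex[OF F shift]] reindex_valid[OF replicate_in_dsimp]
      reindex_valid[OF edge_in_dsimp[of 0] singleton_in_Dk[OF one_in_M]] vertex_aut_eq
      edge_elem_singleton[OF aut_elem_smap[OF F] i]
    by (simp add: wdeg_def)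
  thus ?thesis
    unfolding aut_homotopy_def aut_homotopy_axioms_def
    using partial_grp_axioms vertex_aut_AutSet[OF F] i by simp
qed

lemma simplex_of_in_nerve:
  assumes F: "aut_elem G n F"
  shows "simplex_of n F \<in> sg_car (nerve_Aut G) n"
proof -
  have "edge_elem F i \<in> aut_hom G (vertex_aut F (Suc i)) (vertex_aut F i)" if "i < n" for i
    using aut_homotopy.e_in_normalizer[OF aut_homotopy_restrict_edge[OF F that]]
      aut_homotopy.homotopy[OF aut_homotopy_restrict_edge[OF F that]] by (auto simp: aut_hom_iff)
  thus ?thesis using vertex_aut_AutSet[OF F]
    unfolding simplex_of_def nerve_Aut_def by (auto simp del: upt_Suc)
qed

lemma path_word_in_D: "x \<in> M \<Longrightarrow> x # replicate m one \<in> D \<and> Pi (x # replicate m one) = x"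
proof (induct m)
  case (Suc m)
  thus ?case using insert_one[of "x # replicate m one" "[]"] by (simp add: replicate_append_same[symmetric])
qed (simp add: singleton_in_D)

text \<open>An edge \<open>p \<le> q\<close> of \<open>\<Delta>[n]\<close> is the long edge of the path \<open>p, p, p+1, \<dots>, q\<close>.\<close>

lemma smap_eq_on_edges:
  assumes F1: "prod_smap G n F1" and F2: "prod_smap G n F2"
    and vertices: "\<And>r x. r \<le> n \<Longrightarrow> x \<in> M \<Longrightarrow> F1 [r, r] [x] = F2 [r, r] [x]"
    and edges: "\<And>r. r < n \<Longrightarrow> F1 [r, Suc r] [one] = F2 [r, Suc r] [one]"
    and pq: "p \<le> q" "q \<le> n" and x: "x \<in> M"
  shows "F1 [p, q] [x] = F2 [p, q] [x]"
proof -
  let ?c = "p # [p..<Suc q]" and ?u = "x # replicate (q - p) one"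
  have c: "?c \<in> dsimp n (Suc (q - p))" using pq unfolding dsimp_def by (auto simp: sorted_upt simp del: upt_Suc)
  have u: "?u \<in> Dk G (Suc (q - p))" using path_word_in_D[OF x] by (simp add: Dk_def)
  have "hd (F1 [?c ! j, ?c ! Suc j] [?u ! j]) = hd (F2 [?c ! j, ?c ! Suc j] [?u ! j])"
    if j: "j < Suc (q - p)" for j
  proof (cases j)
    case 0 thus ?thesis using vertices[of p x] pq x by (simp del: upt_Suc)
  next
    case (Suc t)
    have "?c ! j = p + t" "?c ! Suc j = Suc (p + t)" "?u ! j = one"
      using Suc j pq by (simp_all add: nth_Cons' del: upt_Suc)
    thus ?thesis using edges[of "p + t"] j Suc pq by simp
  qed
  hence "F1 ?c ?u = F2 ?c ?u" using smap_letterwise[OF F1 c u] smap_letterwise[OF F2 c u] by simp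
  thus ?thesis
    using smap_Pi[OF F1 c u] smap_Pi[OF F2 c u] path_word_in_D[OF x] pq by (simp del: upt_Suc)
qed

lemma smap_eqI:
  assumes F1: "prod_smap G n F1" and F2: "prod_smap G n F2"
    and "\<And>r x. r \<le> n \<Longrightarrow> x \<in> M \<Longrightarrow> F1 [r, r] [x] = F2 [r, r] [x]"
    and "\<And>r. r < n \<Longrightarrow> F1 [r, Suc r] [one] = F2 [r, Suc r] [one]"
  shows "F1 = F2"
proof (intro ext)
  fix a w
  show "F1 a w = F2 a w"
  proof (cases "prod_valid G n a w")
    case False thus ?thesis using smap_undefined[OF F1] smap_undefined[OF F2] by simp
  next
    case True
    hence a: "a \<in> dsimp n (length w)" and w: "w \<in> Dk G (length w)" using prod_validD by auto
    have "F1 [a ! j, a ! Suc j] [w ! j] = F2 [a ! j, a ! Suc j] [w ! j]" if j: "j < length w" for j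
      using smap_eq_on_edges[OF assms] sorted_nth_mono[OF dsimp_sorted[OF a], of j "Suc j"]
        dsimp_nth_le[OF a, of "Suc j"] in_D_in_M[of w "w ! j"] dsimp_length[OF a] w j by (simp add: Dk_def)
    thus ?thesis using smap_letterwise[OF F1 a w] smap_letterwise[OF F2 a w] by simp
  qed
qed

lemma simplex_of_inj:
  assumes F1: "aut_elem G n F1" and F2: "aut_elem G n F2" and eq: "simplex_of n F1 = simplex_of n F2"
  shows "F1 = F2"
proof (rule smap_eqI[OF aut_elem_smap[OF F1] aut_elem_smap[OF F2]])
  fix r x assume r: "r \<le> n" and x: "x \<in> M"
  have "vertex_aut F1 r = vertex_aut F2 r"
    using eq r nth_map_upt[of r "Suc n" 0 "vertex_aut F1"] nth_map_upt[of r "Suc n" 0 "vertex_aut F2"]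
    unfolding simplex_of_def by (simp del: upt_Suc)
  thus "F1 [r, r] [x] = F2 [r, r] [x]" using vertex_aut_singleton[OF x] by metis
next
  fix r assume r: "r < n"
  have "edge_elem F1 r = edge_elem F2 r"
    using eq r nth_map_upt[of r n 0 "edge_elem F1"] nth_map_upt[of r n 0 "edge_elem F2"]
    unfolding simplex_of_def by simp
  thus "F1 [r, Suc r] [one] = F2 [r, Suc r] [one]"
    using edge_elem_singleton[OF aut_elem_smap[OF F1] r] edge_elem_singleton[OF aut_elem_smap[OF F2] r] by simp
qed

lemma simplex_of_surj:
  assumes X: "X \<in> sg_car (nerve_Aut G) n"
  shows "\<exists>F. aut_elem G n F \<and> simplex_of n F = X"
proof -
  obtain Ps es where X': "X = (Ps, es)" by (cases X)
  interpret N: nerve_simplex G n Ps es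
    using X X' partial_grp_axioms unfolding nerve_simplex_def nerve_simplex_axioms_def by simp
  have "vertex_aut N.glued j = Ps ! j" if "j \<le> n" for j
    using N.glued_vertex[OF that] AutSet_undefined[OF N.Ps_AutSet[OF that]] unfolding vertex_aut_def by auto
  hence "map (vertex_aut N.glued) [0..<Suc n] = Ps"
    using N.length_Ps by (intro nth_equalityI) (simp_all del: upt_Suc)
  moreover have "map (edge_elem N.glued) [0..<n] = es"
    using N.length_es N.glued_edge unfolding edge_elem_def by (intro nth_equalityI) simp_all
  ultimately show ?thesis using N.aut_elem_glued X' unfolding simplex_of_def by blast
qed

end

section \<open>Compatibility with the simplicial group structure\<close>

context partial_grp
begin

lemma aut_sg_face_eq: "sg_face (aut_sg G) (Suc n) i F = reindex n (coface i) F"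
  unfolding aut_sg_def reindex_def by simp

lemma aut_sg_deg_eq: "sg_deg (aut_sg G) n i F = reindex (Suc n) (codeg i) F"
  unfolding aut_sg_def reindex_def by simp

lemma aut_elem_face: "aut_elem G (Suc n) F \<Longrightarrow> i \<le> Suc n \<Longrightarrow> aut_elem G n (reindex n (coface i) F)"
  by (rule aut_elem_reindex) (auto simp: mono_coface coface_def)

lemma aut_elem_deg: "aut_elem G n F \<Longrightarrow> i \<le> n \<Longrightarrow> aut_elem G (Suc n) (reindex (Suc n) (codeg i) F)"
  by (rule aut_elem_reindex) (auto simp: mono_codeg codeg_def)

definition aut_mult :: "nat \<Rightarrow> (nat list \<Rightarrow> 'a list \<Rightarrow> 'a list) \<Rightarrow> (nat list \<Rightarrow> 'a list \<Rightarrow> 'a list) \<Rightarrow> nat list \<Rightarrow> 'a list \<Rightarrow> 'a list" where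
  "aut_mult n S T = (\<lambda>a w. if prod_valid G n a w then T a (S a w) else undefined)"

lemma aut_sg_mult_eq: "sg_mult (aut_sg G) n S T = aut_mult n S T"
  unfolding aut_sg_def aut_mult_def by simp

lemma aut_elem_aut_mult:
  assumes S: "aut_elem G n S" and T: "aut_elem G n T"
  shows "aut_elem G n (aut_mult n S T)"
  unfolding aut_mult_def
proof (rule aut_elem_restrictI)
  note Ss = aut_elem_smap[OF S] and Ts = aut_elem_smap[OF T]
  fix k a w i assume "a \<in> dsimp n (Suc k)" "w \<in> Dk G (Suc k)" "i \<le> Suc k"
  thus "T (ldel i a) (S (ldel i a) (wface G (Suc k) i w)) = wface G (Suc k) i (T a (S a w))"
    using smap_face[OF Ss] smap_face[OF Ts] smap_Dk[OF Ss] by simp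
next
  note Ss = aut_elem_smap[OF S] and Ts = aut_elem_smap[OF T]
  fix k a w i assume "a \<in> dsimp n k" "w \<in> Dk G k" "i \<le> k"
  thus "T (ldup i a) (S (ldup i a) (wdeg G i w)) = wdeg G i (T a (S a w))"
    using smap_deg[OF Ss] smap_deg[OF Ts] smap_Dk[OF Ss] by simp
next
  fix k a assume "a \<in> dsimp n k"
  thus "bij_betw (\<lambda>w. T a (S a w)) (Dk G k) (Dk G k)"
    using bij_betw_trans[OF aut_elem_bij[OF S] aut_elem_bij[OF T]] by (simp add: comp_def)
qed (use smap_Dk[OF aut_elem_smap[OF T]] smap_Dk[OF aut_elem_smap[OF S]] in blast)

lemma edge_elem_compose:
  assumes F: "prod_smap G m F" and r: "Suc (Suc r) \<le> m"
  shows "hd (F [r, Suc (Suc r)] [one]) = Pi [edge_elem F r, edge_elem F (Suc r)]"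
proof -
  let ?c = "[r, Suc r, Suc (Suc r)]" and ?u = "[one, one]"
  have c: "?c \<in> dsimp m (Suc (Suc 0))" using r unfolding dsimp_def by simp
  have u: "?u \<in> Dk G (Suc (Suc 0))" using one_one_in_D by (simp add: Dk_def)
  have "F ?c ?u = [edge_elem F r, edge_elem F (Suc r)]"
    using smap_letterwise[OF F c u] unfolding edge_elem_def by simp
  hence "F [r, Suc (Suc r)] [one] = [Pi [edge_elem F r, edge_elem F (Suc r)]]"
    using smap_Pi[OF F c u] Pi_one_left[OF one_in_M] by simp
  thus ?thesis by simp
qed

lemma vertex_aut_reindex: "j \<le> n \<Longrightarrow> vertex_aut (reindex n f F) j = vertex_aut F (f j)"
  unfolding vertex_aut_def using reindex_valid[OF replicate_in_dsimp] by (auto simp: Dk_def)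

lemma edge_elem_reindex: "Suc l \<le> n \<Longrightarrow> edge_elem (reindex n f F) l = hd (F [f l, f (Suc l)] [one])"
  unfolding edge_elem_def using reindex_valid[OF edge_in_dsimp singleton_in_Dk[OF one_in_M]] by simp

lemma vertices_reindex:
  "map (vertex_aut (reindex n f F)) [0..<Suc n] = map (vertex_aut F \<circ> f) [0..<Suc n]"
  using vertex_aut_reindex by (auto simp del: upt_Suc)

lemma edges_face:
  assumes F: "aut_elem G (Suc n) F" and i: "i \<le> Suc n"
  shows "map (edge_elem (reindex n (coface i) F)) [0..<n] = wface G (Suc n) i (map (edge_elem F) [0..<Suc n])"
proof (rule nth_equalityI)
  show "length (map (edge_elem (reindex n (coface i) F)) [0..<n]) = length (wface G (Suc n) i (map (edge_elem F) [0..<Suc n]))"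
    using length_wface[of "map (edge_elem F) [0..<Suc n]" n i] i by (simp del: upt_Suc)
next
  fix l assume "l < length (map (edge_elem (reindex n (coface i) F)) [0..<n])"
  hence l: "l < n" by simp
  let ?E = "edge_elem F"
  have lhs: "map (edge_elem (reindex n (coface i) F)) [0..<n] ! l = hd (F [coface i l, coface i (Suc l)] [one])"
    using l edge_elem_reindex[of l n "coface i" F] by simp
  consider "i = 0" | "i = Suc n" | "0 < i" "i < Suc n" using i by linarith
  thus "map (edge_elem (reindex n (coface i) F)) [0..<n] ! l = wface G (Suc n) i (map ?E [0..<Suc n]) ! l"
  proof cases
    case 1 thus ?thesis unfolding lhs edge_elem_def using l by (simp add: wface_def nth_tl coface_def del: upt_Suc)
  next
    case 2 thus ?thesis unfolding lhs edge_elem_def using l by (simp add: wface_def nth_butlast coface_def del: upt_Suc)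
  next
    case 3
    have rhs: "wface G (Suc n) i (map ?E [0..<Suc n]) ! l =
      (if l < i - 1 then ?E l else if l = i - 1 then Pi [?E (i - 1), ?E i] else ?E (Suc l))"
      using nth_wface_inner[of "map ?E [0..<Suc n]" n i l] 3 l by (simp del: upt_Suc)
    have "hd (F [i - 1, Suc (Suc (i - 1))] [one]) = Pi [?E (i - 1), ?E (Suc (i - 1))]"
      using edge_elem_compose[OF aut_elem_smap[OF F], of "i - 1"] 3 by simp
    thus ?thesis unfolding lhs rhs using 3 by (auto simp: coface_def edge_elem_def)
  qed
qed

lemma simplex_of_face:
  assumes "aut_elem G (Suc n) F" "i \<le> Suc n"
  shows "simplex_of n (reindex n (coface i) F) = sg_face (nerve_Aut G) (Suc n) i (simplex_of (Suc n) F)"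
proof -
  have "map (vertex_aut (reindex n (coface i) F)) [0..<Suc n] = ldel i (map (vertex_aut F) [0..<Suc (Suc n)])"
    by (simp only: vertices_reindex ldel_map_upt[OF assms(2)])
  thus ?thesis using edges_face[OF assms] unfolding simplex_of_def nerve_Aut_def by simp
qed

lemma edges_deg:
  assumes F: "aut_elem G n F" and i: "i \<le> n"
  shows "map (edge_elem (reindex (Suc n) (codeg i) F)) [0..<Suc n] = wdeg G i (map (edge_elem F) [0..<n])"
proof (rule nth_equalityI)
  fix l assume "l < length (map (edge_elem (reindex (Suc n) (codeg i) F)) [0..<Suc n])"
  hence l: "l < Suc n" by simp
  have "F [i, i] [one] = [one]"
    using AutSet_one[OF vertex_aut_AutSet[OF F i]] vertex_aut_singleton[OF one_in_M] by simp
  moreover have "map (edge_elem (reindex (Suc n) (codeg i) F)) [0..<Suc n] ! l = hd (F [codeg i l, codeg i (Suc l)] [one])"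
    using l edge_elem_reindex[of l "Suc n" "codeg i" F] by (simp del: upt_Suc)
  moreover have "wdeg G i (map (edge_elem F) [0..<n]) ! l =
      (if l < i then edge_elem F l else if l = i then one else edge_elem F (l - 1))"
    unfolding wdeg_def using i l by (auto simp: nth_append min_def)
  ultimately show "map (edge_elem (reindex (Suc n) (codeg i) F)) [0..<Suc n] ! l = wdeg G i (map (edge_elem F) [0..<n]) ! l"
    by (auto simp: codeg_def edge_elem_def)
qed (use i in \<open>simp add: wdeg_def del: upt_Suc\<close>)

lemma simplex_of_deg:
  assumes "aut_elem G n F" "i \<le> n"
  shows "simplex_of (Suc n) (reindex (Suc n) (codeg i) F) = sg_deg (nerve_Aut G) n i (simplex_of n F)"
proof -
  have "map (vertex_aut (reindex (Suc n) (codeg i) F)) [0..<Suc (Suc n)] = ldup i (map (vertex_aut F) [0..<Suc n])"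
    by (simp only: vertices_reindex ldup_map_upt[OF assms(2)])
  thus ?thesis using edges_deg[OF assms] unfolding simplex_of_def nerve_Aut_def by simp
qed

lemma vertex_aut_aut_mult:
  assumes S: "aut_elem G n S" and j: "j \<le> n"
  shows "vertex_aut (aut_mult n S T) j = aut_comp G (vertex_aut T j) (vertex_aut S j)"
proof
  fix w show "vertex_aut (aut_mult n S T) j w = aut_comp G (vertex_aut T j) (vertex_aut S j) w"
  proof (cases "w \<in> D")
    case True
    have wk: "w \<in> Dk G (length w)" using True by (simp add: Dk_def)
    have "S (replicate (Suc (length w)) j) w \<in> Dk G (length w)"
      using smap_Dk[OF aut_elem_smap[OF S] replicate_in_dsimp[OF j] wk] .
    thus ?thesis unfolding vertex_aut_def aut_mult_def aut_comp_def
      using True prod_validI[OF replicate_in_dsimp[OF j] wk] by (simp add: Dk_def del: replicate_Suc)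
  qed (simp add: vertex_aut_def aut_comp_def)
qed

lemma edge_elem_aut_mult:
  assumes S: "aut_elem G n S" and T: "aut_elem G n T" and i: "i < n"
  shows "edge_elem (aut_mult n S T) i = Pi ((vertex_aut T i) [edge_elem S i] @ [edge_elem T i])"
proof -
  interpret H: aut_homotopy G "vertex_aut T i" "vertex_aut T (Suc i)" "edge_elem T i" "reindex 1 (\<lambda>x. x + i) T"
    using aut_homotopy_restrict_edge[OF T i] .
  have s: "S [i, Suc i] [one] = [edge_elem S i]" "edge_elem S i \<in> M"
    using edge_elem_singleton[OF aut_elem_smap[OF S] i] by auto
  have "aut_mult n S T [i, Suc i] [one] = T [i, Suc i] [edge_elem S i]"
    unfolding aut_mult_def using prod_validI[OF edge_in_dsimp singleton_in_Dk[OF one_in_M]] i s by simp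
  also have "\<dots> = reindex 1 (\<lambda>x. x + i) T [0, 1] [edge_elem S i]"
    using reindex_valid[OF edge_in_dsimp[of 0] singleton_in_Dk[OF s(2)]] by simp
  finally show ?thesis
    using H.F_edge_letter_Phi[OF s(2)] AutSet_singleton[OF vertex_aut_AutSet[OF T] s(2)] i
    unfolding edge_elem_def by simp
qed

text \<open>The product of \<open>aut(\<M>)\<close> applies \<open>S\<close> first, so the vertex/edge data turn it into
  the monoidal product taken in the opposite order.\<close>

lemma simplex_of_mult:
  assumes S: "aut_elem G n S" and T: "aut_elem G n T"
  shows "simplex_of n (aut_mult n S T) = sg_mult (nerve_Aut G) n (simplex_of n T) (simplex_of n S)"
proof -
  have "map (vertex_aut (aut_mult n S T)) [0..<Suc n] =
      map2 (aut_comp G) (map (vertex_aut T) [0..<Suc n]) (map (vertex_aut S) [0..<Suc n])"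
    using vertex_aut_aut_mult[OF S] by (intro nth_equalityI) (simp_all del: upt_Suc)
  moreover have "map (edge_elem (aut_mult n S T)) [0..<n] =
      map (\<lambda>i. Pi ((map (vertex_aut T) [0..<Suc n] ! i) [map (edge_elem S) [0..<n] ! i] @
        [map (edge_elem T) [0..<n] ! i])) [0..<n]"
    using edge_elem_aut_mult[OF S T] by (simp add: nth_map_upt del: upt_Suc)
  ultimately show ?thesis unfolding simplex_of_def nerve_Aut_def by (simp del: upt_Suc)
qed

end

context partial_grp
begin

definition aut_sg_inv :: "nat \<Rightarrow> (nat list \<Rightarrow> 'a list \<Rightarrow> 'a list) \<Rightarrow> nat list \<Rightarrow> 'a list \<Rightarrow> 'a list" where
  "aut_sg_inv n F = (\<lambda>a w. if prod_valid G n a w then inv_into (Dk G (length w)) (F a) w else undefined)"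

lemma aut_sg_inv_right:
  assumes F: "aut_elem G n F" and a: "a \<in> dsimp n k" and w: "w \<in> Dk G k"
  shows "aut_sg_inv n F a w \<in> Dk G k \<and> F a (aut_sg_inv n F a w) = w"
proof -
  have b: "bij_betw (F a) (Dk G k) (Dk G k)" using aut_elem_bij[OF F a] .
  have "inv_into (Dk G k) (F a) w \<in> Dk G k" using b w by (metis bij_betw_def inv_into_into)
  thus ?thesis
    unfolding aut_sg_inv_def using prod_validI[OF a w] w bij_betw_inv_into_right[OF b w] by (simp add: Dk_def)
qed

lemma aut_sg_inv_eqI:
  assumes F: "aut_elem G n F" and a: "a \<in> dsimp n k" and x: "x \<in> Dk G k" and e: "F a x = w"
  shows "aut_sg_inv n F a w = x"
proof -
  have w: "w \<in> Dk G k" using smap_Dk[OF aut_elem_smap[OF F] a x] e by simp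
  have "inv_into (Dk G k) (F a) w = x"
    using aut_elem_bij[OF F a] x e by (metis bij_betw_def inv_into_f_f)
  thus ?thesis unfolding aut_sg_inv_def using prod_validI[OF a w] w by (simp add: Dk_def)
qed

lemma aut_elem_aut_sg_inv:
  assumes F: "aut_elem G n F"
  shows "aut_elem G n (aut_sg_inv n F)"
proof -
  have "aut_elem G n (\<lambda>a w. if prod_valid G n a w then aut_sg_inv n F a w else undefined)"
  proof (rule aut_elem_restrictI)
    fix k a w i assume a: "a \<in> dsimp n (Suc k)" and w: "w \<in> Dk G (Suc k)" and i: "i \<le> Suc k"
    let ?v = "aut_sg_inv n F a w"
    have v: "?v \<in> Dk G (Suc k)" "F a ?v = w" using aut_sg_inv_right[OF F a w] by auto
    show "aut_sg_inv n F (ldel i a) (wface G (Suc k) i w) = wface G (Suc k) i ?v"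
      using aut_sg_inv_eqI[OF F dsimp_ldel[OF a i] wface_in_Dk[OF v(1) i]]
        smap_face[OF aut_elem_smap[OF F] a v(1) i] v(2) by simp
  next
    fix k a w i assume a: "a \<in> dsimp n k" and w: "w \<in> Dk G k" and i: "i \<le> k"
    let ?v = "aut_sg_inv n F a w"
    have v: "?v \<in> Dk G k" "F a ?v = w" using aut_sg_inv_right[OF F a w] by auto
    show "aut_sg_inv n F (ldup i a) (wdeg G i w) = wdeg G i ?v"
      using aut_sg_inv_eqI[OF F dsimp_ldup[OF a i] wdeg_in_Dk[OF v(1) i]]
        smap_deg[OF aut_elem_smap[OF F] a v(1) i] v(2) by simp
  next
    fix k a assume a: "a \<in> dsimp n k"
    show "bij_betw (aut_sg_inv n F a) (Dk G k) (Dk G k)"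
      using bij_betw_inv_into[OF aut_elem_bij[OF F a]]
      by (rule bij_betw_cong[THEN iffD1, rotated]) (simp add: aut_sg_inv_def prod_validI[OF a] Dk_def)
  qed (use aut_sg_inv_right[OF F] in blast)
  moreover have "(\<lambda>a w. if prod_valid G n a w then aut_sg_inv n F a w else undefined) = aut_sg_inv n F"
    unfolding aut_sg_inv_def by (intro ext) simp
  ultimately show ?thesis by simp
qed

lemma aut_sg_inv_aut_sg_inv: "aut_elem G n F \<Longrightarrow> aut_sg_inv n (aut_sg_inv n F) = F"
proof (intro ext)
  fix a w assume F: "aut_elem G n F"
  show "aut_sg_inv n (aut_sg_inv n F) a w = F a w"
  proof (cases "prod_valid G n a w")
    case False thus ?thesis unfolding aut_sg_inv_def using smap_undefined[OF aut_elem_smap[OF F]] by simp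
  next
    case True
    hence a: "a \<in> dsimp n (length w)" and w: "w \<in> Dk G (length w)" using prod_validD by auto
    have "aut_sg_inv n F a (F a w) = w" using aut_sg_inv_eqI[OF F a w] by simp
    thus ?thesis using aut_sg_inv_eqI[OF aut_elem_aut_sg_inv[OF F] a smap_Dk[OF aut_elem_smap[OF F] a w]] by simp
  qed
qed

lemma aut_sg_inv_reindex:
  assumes F: "aut_elem G m F" and f: "mono f" and fn: "\<forall>x\<le>n. f x \<le> m"
  shows "aut_sg_inv n (reindex n f F) = reindex n f (aut_sg_inv m F)"
proof (intro ext)
  fix a w
  show "aut_sg_inv n (reindex n f F) a w = reindex n f (aut_sg_inv m F) a w"
  proof (cases "prod_valid G n a w")
    case False thus ?thesis unfolding aut_sg_inv_def reindex_def by simp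
  next
    case True
    hence a: "a \<in> dsimp n (length w)" and w: "w \<in> Dk G (length w)" using prod_validD by auto
    have x: "aut_sg_inv m F (map f a) w \<in> Dk G (length w)" "F (map f a) (aut_sg_inv m F (map f a) w) = w"
      using aut_sg_inv_right[OF F dsimp_map[OF a f fn] w] by auto
    thus ?thesis
      using aut_sg_inv_eqI[OF aut_elem_reindex[OF F f fn] a x(1)] reindex_valid[OF a x(1), of f F]
        reindex_valid[OF a w, of f "aut_sg_inv m F"] by simp
  qed
qed

lemma aut_sg_inv_aut_mult:
  assumes S: "aut_elem G n S" and T: "aut_elem G n T"
  shows "aut_sg_inv n (aut_mult n S T) = aut_mult n (aut_sg_inv n T) (aut_sg_inv n S)"
proof (intro ext)
  fix a w
  show "aut_sg_inv n (aut_mult n S T) a w = aut_mult n (aut_sg_inv n T) (aut_sg_inv n S) a w"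
  proof (cases "prod_valid G n a w")
    case False thus ?thesis unfolding aut_sg_inv_def aut_mult_def by simp
  next
    case True
    hence a: "a \<in> dsimp n (length w)" and w: "w \<in> Dk G (length w)" using prod_validD by auto
    let ?y = "aut_sg_inv n T a w"
    have y: "?y \<in> Dk G (length w)" "T a ?y = w" using aut_sg_inv_right[OF T a w] by auto
    let ?x = "aut_sg_inv n S a ?y"
    have x: "?x \<in> Dk G (length w)" "S a ?x = ?y" using aut_sg_inv_right[OF S a y(1)] by auto
    have "aut_mult n S T a ?x = w" unfolding aut_mult_def using prod_validI[OF a x(1)] x y by simp
    thus ?thesis using aut_sg_inv_eqI[OF aut_elem_aut_mult[OF S T] a x(1)] True unfolding aut_mult_def by simp
  qed
qed

definition nerve_of_aut :: "nat \<Rightarrow> (nat list \<Rightarrow> 'a list \<Rightarrow> 'a list) \<Rightarrow> ('a list \<Rightarrow> 'a list) list \<times> 'a list" where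
  "nerve_of_aut n F = simplex_of n (aut_sg_inv n F)"

lemma aut_sg_car: "sg_car (aut_sg G) n = {F. aut_elem G n F}"
  unfolding aut_sg_def by simp

lemma nerve_of_aut_bij: "bij_betw (nerve_of_aut n) (sg_car (aut_sg G) n) (sg_car (nerve_Aut G) n)"
  unfolding bij_betw_def aut_sg_car
proof
  show "inj_on (nerve_of_aut n) {F. aut_elem G n F}"
  proof (rule inj_onI)
    fix F1 F2 assume "F1 \<in> {F. aut_elem G n F}" "F2 \<in> {F. aut_elem G n F}" "nerve_of_aut n F1 = nerve_of_aut n F2"
    hence "aut_sg_inv n F1 = aut_sg_inv n F2"
      using simplex_of_inj[OF aut_elem_aut_sg_inv aut_elem_aut_sg_inv] unfolding nerve_of_aut_def by simp
    thus "F1 = F2" using aut_sg_inv_aut_sg_inv \<open>F1 \<in> _\<close> \<open>F2 \<in> _\<close> by (metis mem_Collect_eq)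
  qed
next
  have "X \<in> nerve_of_aut n ` {F. aut_elem G n F}" if X: "X \<in> sg_car (nerve_Aut G) n" for X
  proof -
    obtain F where F: "aut_elem G n F" "simplex_of n F = X" using simplex_of_surj[OF X] by blast
    hence "nerve_of_aut n (aut_sg_inv n F) = X" unfolding nerve_of_aut_def using aut_sg_inv_aut_sg_inv by simp
    thus ?thesis using aut_elem_aut_sg_inv[OF F(1)] by blast
  qed
  thus "nerve_of_aut n ` {F. aut_elem G n F} = sg_car (nerve_Aut G) n"
    using simplex_of_in_nerve[OF aut_elem_aut_sg_inv] unfolding nerve_of_aut_def by auto
qed

lemma nerve_of_aut_face:
  assumes "F \<in> sg_car (aut_sg G) (Suc n)" "i \<le> Suc n"
  shows "nerve_of_aut n (sg_face (aut_sg G) (Suc n) i F) = sg_face (nerve_Aut G) (Suc n) i (nerve_of_aut (Suc n) F)"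
proof -
  have F: "aut_elem G (Suc n) F" using assms(1) unfolding aut_sg_car by simp
  have "\<forall>x\<le>n. coface i x \<le> Suc n" by (auto simp: coface_def)
  hence "aut_sg_inv n (reindex n (coface i) F) = reindex n (coface i) (aut_sg_inv (Suc n) F)"
    using aut_sg_inv_reindex[OF F mono_coface] by blast
  thus ?thesis
    using simplex_of_face[OF aut_elem_aut_sg_inv[OF F] assms(2)] unfolding nerve_of_aut_def aut_sg_face_eq by simp
qed

lemma nerve_of_aut_deg:
  assumes "F \<in> sg_car (aut_sg G) n" "i \<le> n"
  shows "nerve_of_aut (Suc n) (sg_deg (aut_sg G) n i F) = sg_deg (nerve_Aut G) n i (nerve_of_aut n F)"
proof -
  have F: "aut_elem G n F" using assms(1) unfolding aut_sg_car by simp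
  have "\<forall>x\<le>Suc n. codeg i x \<le> n" using assms(2) by (auto simp: codeg_def)
  hence "aut_sg_inv (Suc n) (reindex (Suc n) (codeg i) F) = reindex (Suc n) (codeg i) (aut_sg_inv n F)"
    using aut_sg_inv_reindex[OF F mono_codeg] by blast
  thus ?thesis
    using simplex_of_deg[OF aut_elem_aut_sg_inv[OF F] assms(2)] unfolding nerve_of_aut_def aut_sg_deg_eq by simp
qed

lemma nerve_of_aut_mult:
  assumes "S \<in> sg_car (aut_sg G) n" "T \<in> sg_car (aut_sg G) n"
  shows "nerve_of_aut n (sg_mult (aut_sg G) n S T) = sg_mult (nerve_Aut G) n (nerve_of_aut n S) (nerve_of_aut n T)"
proof -
  have S: "aut_elem G n S" and T: "aut_elem G n T" using assms unfolding aut_sg_car by simp_all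
  show ?thesis
    using simplex_of_mult[OF aut_elem_aut_sg_inv[OF T] aut_elem_aut_sg_inv[OF S]] aut_sg_inv_aut_mult[OF S T]
    unfolding nerve_of_aut_def aut_sg_mult_eq by simp
qed

end

lemma ssg_iso_inv_into:
  assumes bij: "\<And>n. bij_betw (h n) (sg_car Y n) (sg_car X n)"
    and face_closed: "\<And>n i y. y \<in> sg_car Y (Suc n) \<Longrightarrow> i \<le> Suc n \<Longrightarrow> sg_face Y (Suc n) i y \<in> sg_car Y n"
    and deg_closed: "\<And>n i y. y \<in> sg_car Y n \<Longrightarrow> i \<le> n \<Longrightarrow> sg_deg Y n i y \<in> sg_car Y (Suc n)"
    and mult_closed: "\<And>n y z. y \<in> sg_car Y n \<Longrightarrow> z \<in> sg_car Y n \<Longrightarrow> sg_mult Y n y z \<in> sg_car Y n"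
    and face: "\<And>n i y. y \<in> sg_car Y (Suc n) \<Longrightarrow> i \<le> Suc n \<Longrightarrow>
      h n (sg_face Y (Suc n) i y) = sg_face X (Suc n) i (h (Suc n) y)"
    and deg: "\<And>n i y. y \<in> sg_car Y n \<Longrightarrow> i \<le> n \<Longrightarrow>
      h (Suc n) (sg_deg Y n i y) = sg_deg X n i (h n y)"
    and mult: "\<And>n y z. y \<in> sg_car Y n \<Longrightarrow> z \<in> sg_car Y n \<Longrightarrow>
      h n (sg_mult Y n y z) = sg_mult X n (h n y) (h n z)"
  shows "ssg_iso X Y (\<lambda>n. inv_into (sg_car Y n) (h n))"
proof -
  let ?g = "\<lambda>n. inv_into (sg_car Y n) (h n)"
  have g: "?g n x \<in> sg_car Y n" "h n (?g n x) = x" if "x \<in> sg_car X n" for n x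
    using bij[of n] that by (auto simp: bij_betw_def inv_into_into f_inv_into_f)
  have gh: "?g n (h n y) = y" if "y \<in> sg_car Y n" for n y
    using bij[of n] that by (simp add: bij_betw_def)
  show ?thesis
    unfolding ssg_iso_def
  proof (intro conjI allI impI)
    fix n i x assume x: "x \<in> sg_car X (Suc n) \<and> i \<le> Suc n"
    hence "sg_face X (Suc n) i x = h n (sg_face Y (Suc n) i (?g (Suc n) x))"
      using face[OF g(1)] g(2) by simp
    thus "?g n (sg_face X (Suc n) i x) = sg_face Y (Suc n) i (?g (Suc n) x)"
      using gh face_closed[OF g(1)] x by simp
  next
    fix n i x assume x: "x \<in> sg_car X n \<and> i \<le> n"
    hence "sg_deg X n i x = h (Suc n) (sg_deg Y n i (?g n x))"
      using deg[OF g(1)] g(2) by simp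
    thus "?g (Suc n) (sg_deg X n i x) = sg_deg Y n i (?g n x)"
      using gh deg_closed[OF g(1)] x by simp
  next
    fix n x y assume xy: "x \<in> sg_car X n \<and> y \<in> sg_car X n"
    hence "sg_mult X n x y = h n (sg_mult Y n (?g n x) (?g n y))"
      using mult[OF g(1) g(1)] g(2) by simp
    thus "?g n (sg_mult X n x y) = sg_mult Y n (?g n x) (?g n y)"
      using gh mult_closed[OF g(1) g(1)] xy by simp
  qed (rule bij_betw_inv_into[OF bij])
qed

theorem theorem5p10:
  fixes G :: "'a pgroup"
  assumes "partial_group G"
  shows "\<exists>f. ssg_iso (nerve_Aut G) (aut_sg G) f"
proof -
  interpret partial_grp G using assms by unfold_locales
  have "ssg_iso (nerve_Aut G) (aut_sg G) (\<lambda>n. inv_into (sg_car (aut_sg G) n) (nerve_of_aut n))"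
  proof (rule ssg_iso_inv_into[where h = nerve_of_aut,
        OF nerve_of_aut_bij _ _ _ nerve_of_aut_face nerve_of_aut_deg nerve_of_aut_mult])
    show "sg_face (aut_sg G) (Suc n) i F \<in> sg_car (aut_sg G) n" if "F \<in> sg_car (aut_sg G) (Suc n)" "i \<le> Suc n" for n i F
      using aut_elem_face that unfolding aut_sg_face_eq by (simp add: aut_sg_def)
    show "sg_deg (aut_sg G) n i F \<in> sg_car (aut_sg G) (Suc n)" if "F \<in> sg_car (aut_sg G) n" "i \<le> n" for n i F
      using aut_elem_deg that unfolding aut_sg_deg_eq by (simp add: aut_sg_def)
    show "sg_mult (aut_sg G) n S T \<in> sg_car (aut_sg G) n" if "S \<in> sg_car (aut_sg G) n" "T \<in> sg_car (aut_sg G) n" for n S T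
      using aut_elem_aut_mult that unfolding aut_sg_mult_eq by (simp add: aut_sg_def)
  qed
  thus ?thesis by blast
qed

end
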